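(* Let $k=\mathbb{F}_q$ ($q$ a power of 2) and let $k\subseteq K\subseteq\overline{k}$ be a finite extension. Let $C$ be an ordinary non-singular quartic plane curve defined over $K$. Then all bitangents of $C$ are defined over $K$ if and only if $C$ is $K$-isomorphic to $C_Q$ for some $Q\in\mathcal{Q}$ with coefficients in $K$.
   Context: A non-singular plane quartic is ordinary if its Jacobian has $2$-rank $3$ (equivalently, it has seven bitangents). $\mathcal{Q}$ is the set of quadratic forms $Q=ax^2+by^2+cz^2+dxy+eyz+fzx$ with coefficients in $\overline{k}$ satisfying $abc\neq0$, $a+b+d\neq0$, $b+c+e\neq0$, $a+c+f\neq0$, $a+b+c+d+e+f\neq1$, and $C_Q\subset\mathbb{P}^2$ is the curve $Q(x,y,z)^2=xyz(x+y+z)$. *)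

theory Defs
  imports "HOL-Computational_Algebra.Polynomial"
begin

definition char2 :: "'a::field itself \<Rightarrow> bool" where
  "char2 _ \<longleftrightarrow> (1::'a) + 1 = 0"

definition alg_closed :: "'a::field itself \<Rightarrow> bool" where
  "alg_closed _ \<longleftrightarrow> (\<forall>p::'a poly. degree p > 0 \<longrightarrow> (\<exists>x. poly p x = 0))"

definition is_subfield :: "'a::field set \<Rightarrow> bool" where
  "is_subfield K \<longleftrightarrow> 0 \<in> K \<and> 1 \<in> K \<and>
     (\<forall>x\<in>K. \<forall>y\<in>K. x + y \<in> K \<and> x * y \<in> K) \<and>
     (\<forall>x\<in>K. - x \<in> K) \<and> (\<forall>x\<in>K. x \<noteq> 0 \<longrightarrow> inverse x \<in> K)"

definition algebraic_over :: "'a::field set \<Rightarrow> bool" where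
  "algebraic_over K \<longleftrightarrow>
     (\<forall>x::'a. \<exists>p. p \<noteq> 0 \<and> (\<forall>i. coeff p i \<in> K) \<and> poly p x = 0)"

text \<open>Points of the affine cone over P^2 are triples. A ternary quartic form is given by
  coefficients c i j of the monomial x^i y^j z^(4-i-j), for i + j <= 4.\<close>

type_synonym 'a pt = "'a \<times> 'a \<times> 'a"

definition qmonos :: "(nat \<times> nat) set" where
  "qmonos = {(i, j). i + j \<le> 4}"

definition qeval :: "(nat \<Rightarrow> nat \<Rightarrow> 'a::comm_ring_1) \<Rightarrow> 'a pt \<Rightarrow> 'a" where
  "qeval c p = (case p of (x, y, z) \<Rightarrow>
     (\<Sum>(i, j)\<in>qmonos. c i j * x ^ i * y ^ j * z ^ (4 - i - j)))"

definition qdx :: "(nat \<Rightarrow> nat \<Rightarrow> 'a::comm_ring_1) \<Rightarrow> 'a pt \<Rightarrow> 'a" where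
  "qdx c p = (case p of (x, y, z) \<Rightarrow>
     (\<Sum>(i, j)\<in>qmonos. of_nat i * c i j * x ^ (i - 1) * y ^ j * z ^ (4 - i - j)))"

definition qdy :: "(nat \<Rightarrow> nat \<Rightarrow> 'a::comm_ring_1) \<Rightarrow> 'a pt \<Rightarrow> 'a" where
  "qdy c p = (case p of (x, y, z) \<Rightarrow>
     (\<Sum>(i, j)\<in>qmonos. of_nat j * c i j * x ^ i * y ^ (j - 1) * z ^ (4 - i - j)))"

definition qdz :: "(nat \<Rightarrow> nat \<Rightarrow> 'a::comm_ring_1) \<Rightarrow> 'a pt \<Rightarrow> 'a" where
  "qdz c p = (case p of (x, y, z) \<Rightarrow>
     (\<Sum>(i, j)\<in>qmonos. of_nat (4 - i - j) * c i j * x ^ i * y ^ j * z ^ (4 - i - j - 1)))"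

definition nonsingular_quartic :: "(nat \<Rightarrow> nat \<Rightarrow> 'a::comm_ring_1) \<Rightarrow> bool" where
  "nonsingular_quartic c \<longleftrightarrow>
     (\<forall>p. p \<noteq> (0, 0, 0) \<longrightarrow>
        \<not> (qeval c p = 0 \<and> qdx c p = 0 \<and> qdy c p = 0 \<and> qdz c p = 0))"

definition pt_add :: "'a::comm_ring_1 pt \<Rightarrow> 'a pt \<Rightarrow> 'a pt" where
  "pt_add p r = (case p of (x, y, z) \<Rightarrow> case r of (u, v, w) \<Rightarrow> (x + u, y + v, z + w))"

definition pt_scale :: "'a::comm_ring_1 \<Rightarrow> 'a pt \<Rightarrow> 'a pt" where
  "pt_scale s p = (case p of (x, y, z) \<Rightarrow> (s * x, s * y, s * z))"

definition cross :: "'a::comm_ring_1 pt \<Rightarrow> 'a pt \<Rightarrow> 'a pt" where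
  "cross p r = (case p of (x, y, z) \<Rightarrow> case r of (u, v, w) \<Rightarrow>
      (y * w - z * v, z * u - x * w, x * v - y * u))"

definition line_set :: "'a::comm_ring_1 pt \<Rightarrow> 'a pt set" where
  "line_set v = (case v of (a, b, d) \<Rightarrow> {(x, y, z). a * x + b * y + d * z = 0})"

text \<open>A line is a bitangent if the restriction of the quartic to it (parametrised by a basis
  P, R of the line) is the square of a nonzero binary quadratic form, i.e. the intersection
  divisor of the line with the curve is of the form 2D.\<close>
definition is_bitangent :: "(nat \<Rightarrow> nat \<Rightarrow> 'a::comm_ring_1) \<Rightarrow> 'a pt \<Rightarrow> bool" where
  "is_bitangent c v \<longleftrightarrow> v \<noteq> (0, 0, 0) \<and>
     (\<exists>P R. P \<in> line_set v \<and> R \<in> line_set v \<and> cross P R \<noteq> (0, 0, 0) \<and>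
        (\<exists>g0 g1 g2. (g0, g1, g2) \<noteq> (0, 0, 0) \<and>
           (\<forall>s t. qeval c (pt_add (pt_scale s P) (pt_scale t R))
                    = (g0 * s ^ 2 + g1 * s * t + g2 * t ^ 2) ^ 2)))"

definition bitangents :: "(nat \<Rightarrow> nat \<Rightarrow> 'a::comm_ring_1) \<Rightarrow> 'a pt set set" where
  "bitangents c = {line_set v | v. is_bitangent c v}"

definition line_over :: "'a::comm_ring_1 set \<Rightarrow> 'a pt set \<Rightarrow> bool" where
  "line_over K L \<longleftrightarrow> (\<exists>a b d. (a, b, d) \<noteq> (0, 0, 0) \<and> a \<in> K \<and> b \<in> K \<and> d \<in> K \<and>
                          L = line_set (a, b, d))"

definition ordinary_quartic :: "(nat \<Rightarrow> nat \<Rightarrow> 'a::comm_ring_1) \<Rightarrow> bool" where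
  "ordinary_quartic c \<longleftrightarrow> finite (bitangents c) \<and> card (bitangents c) = 7"

definition in_QQ :: "'a::field \<Rightarrow> 'a \<Rightarrow> 'a \<Rightarrow> 'a \<Rightarrow> 'a \<Rightarrow> 'a \<Rightarrow> bool" where
  "in_QQ a b cc d e f \<longleftrightarrow> a * b * cc \<noteq> 0 \<and> a + b + d \<noteq> 0 \<and> b + cc + e \<noteq> 0 \<and>
     a + cc + f \<noteq> 0 \<and> a + b + cc + d + e + f \<noteq> 1"

definition CQ :: "'a::comm_ring_1 \<Rightarrow> 'a \<Rightarrow> 'a \<Rightarrow> 'a \<Rightarrow> 'a \<Rightarrow> 'a \<Rightarrow> 'a pt \<Rightarrow> 'a" where
  "CQ a b cc d e f p = (case p of (x, y, z) \<Rightarrow>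
     (a * x ^ 2 + b * y ^ 2 + cc * z ^ 2 + d * x * y + e * y * z + f * z * x) ^ 2
       - x * y * z * (x + y + z))"

definition lin :: "(nat \<Rightarrow> nat \<Rightarrow> 'a::comm_ring_1) \<Rightarrow> 'a pt \<Rightarrow> 'a pt" where
  "lin M p = (case p of (x, y, z) \<Rightarrow>
     (M 0 0 * x + M 0 1 * y + M 0 2 * z,
      M 1 0 * x + M 1 1 * y + M 1 2 * z,
      M 2 0 * x + M 2 1 * y + M 2 2 * z))"

definition det3 :: "(nat \<Rightarrow> nat \<Rightarrow> 'a::comm_ring_1) \<Rightarrow> 'a" where
  "det3 M = M 0 0 * (M 1 1 * M 2 2 - M 1 2 * M 2 1)
          - M 0 1 * (M 1 0 * M 2 2 - M 1 2 * M 2 0)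
          + M 0 2 * (M 1 0 * M 2 1 - M 1 1 * M 2 0)"

definition K_iso :: "'a::field set \<Rightarrow> (nat \<Rightarrow> nat \<Rightarrow> 'a) \<Rightarrow> ('a pt \<Rightarrow> 'a) \<Rightarrow> bool" where
  "K_iso K c G \<longleftrightarrow> (\<exists>M lam. (\<forall>i<3. \<forall>j<3. M i j \<in> K) \<and> det3 M \<noteq> 0 \<and> lam \<in> K \<and> lam \<noteq> 0 \<and>
      (\<forall>p. qeval c (lin M p) = lam * G p))"

end

theory Submission
  imports Defs
begin

text \<open>
  In characteristic 2 the polar form D(U, V) = V \<cdot> grad F(U) of a quartic F is determined by the
  values of F: sampling F along the line U + t V at the cube roots of unity t = 1, \<omega>, \<omega>^2
  isolates the coefficient of t. Hence D is compatible with linear changes of coordinates, and it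
  vanishes on every bitangent, along which F is a square.

  If C is K-isomorphic to C_Q, the seven lines of P^2(F_2) are bitangents of C_Q defined over F_2;
  their images are seven distinct bitangents of C defined over K, so they are all of them.

  Conversely, suppose all bitangents are defined over K. Two of them meet in a point, and not all
  seven pass through it: in coordinates where the two are x = 0 and y = 0, the vanishing of D
  along bitangents through (0,0,1) leaves at most three candidates. Taking three non-concurrent
  bitangents over K as coordinate lines, D kills the coefficients of y^3 z, y z^3, x^3 z, x z^3,
  x^3 y, x y^3, so F = S^2 + x y z (A x + B y + G z) with S a conic over K (every element of the
  finite field K is a square). Nonsingularity and the count of seven bitangents force
  A B G \<noteq> 0, and the substitution (x, y, z) \<mapsto> (B G x, A G y, A B z) turns F into a multiple of
  a form defining some C_Q; the conditions defining Q say exactly that C_Q is nonsingular at the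
  seven points of P^2(F_2).
\<close>

lemma char2_two_eq_zero: "char2 TYPE('a::field) \<Longrightarrow> (2::'a) = 0"
  unfolding char2_def by (metis one_add_one)

lemma char2_numeral_Bit0: "(2::'a::semiring_1) = 0 \<Longrightarrow> numeral (Num.Bit0 n) = (0::'a)"
  by (metis mult_2 mult_zero_left numeral_Bit0)

lemma char2_numeral_Bit1: "(2::'a::semiring_1) = 0 \<Longrightarrow> numeral (Num.Bit1 n) = (1::'a)"
  by (metis add.commute add_0 char2_numeral_Bit0 numeral_Bit1 numeral_Bit0)

lemma char2_uminus: "(2::'a::ring_1) = 0 \<Longrightarrow> - (x::'a) = x"
  by (metis add_eq_0_iff mult_2 mult_zero_left)

lemma char2_diff: "(2::'a::ring_1) = 0 \<Longrightarrow> (x::'a) - y = x + y"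
  by (metis char2_uminus diff_conv_add_uminus)

lemmas char2_simps = char2_numeral_Bit0 char2_numeral_Bit1 char2_uminus char2_diff

lemma char2_square_inj:
  fixes r s :: "'a::field"
  assumes "(2::'a) = 0" and "r^2 = s^2"
  shows "r = s"
proof -
  have "(r + s)^2 = 0"
    using assms by (simp add: power2_eq_square algebra_simps)
  then have "r = - s"
    by (simp add: add_eq_0_iff)
  then show ?thesis
    using char2_uminus[OF assms(1)] by simp
qed

lemma subfield_zero: "is_subfield K \<Longrightarrow> 0 \<in> K"
  and subfield_one: "is_subfield K \<Longrightarrow> 1 \<in> K"
  and subfield_add: "is_subfield K \<Longrightarrow> x \<in> K \<Longrightarrow> y \<in> K \<Longrightarrow> x + y \<in> K"
  and subfield_mult: "is_subfield K \<Longrightarrow> x \<in> K \<Longrightarrow> y \<in> K \<Longrightarrow> x * y \<in> K"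
  and subfield_uminus: "is_subfield K \<Longrightarrow> x \<in> K \<Longrightarrow> - x \<in> K"
  by (auto simp: is_subfield_def)

lemma subfield_diff: "is_subfield K \<Longrightarrow> x \<in> K \<Longrightarrow> y \<in> K \<Longrightarrow> x - y \<in> K"
  using subfield_add[of K x "-y"] subfield_uminus[of K y] by simp

lemma subfield_divide: "is_subfield K \<Longrightarrow> x \<in> K \<Longrightarrow> y \<in> K \<Longrightarrow> x / y \<in> K"
  by (cases "y = 0") (auto simp: is_subfield_def divide_inverse)

lemma subfield_power: "is_subfield K \<Longrightarrow> x \<in> K \<Longrightarrow> x ^ n \<in> K"
  by (induction n) (auto intro: subfield_mult subfield_one)

lemma subfield_of_nat: "is_subfield K \<Longrightarrow> of_nat n \<in> K"
  by (induction n) (auto intro: subfield_zero subfield_one subfield_add)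

lemma subfield_numeral: "is_subfield K \<Longrightarrow> numeral n \<in> K"
  using subfield_of_nat[of K "numeral n"] by simp

lemmas subfield_closed = subfield_zero subfield_one subfield_add subfield_mult subfield_uminus
  subfield_diff subfield_divide subfield_power subfield_numeral

lemma finite_char2_subfield_sqrt:
  fixes K :: "'a::field set"
  assumes "is_subfield K" and "finite K" and "(2::'a) = 0" and "x \<in> K"
  shows "\<exists>r\<in>K. r^2 = x"
proof -
  have "(\<lambda>r. r^2) ` K \<subseteq> K"
    using subfield_power[OF assms(1)] by blast
  moreover have "inj_on (\<lambda>r. r^2) K"
    using char2_square_inj[OF assms(3)] by (simp add: inj_on_def)
  ultimately have "(\<lambda>r. r^2) ` K = K"
    by (rule endo_inj_surj[OF assms(2)])
  then show ?thesis
    using assms(4) by (metis imageE)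
qed

lemma finite_char2_subfield_coeff_roots:
  fixes K :: "'a::field set"
  assumes "is_subfield K" and "finite K" and "(2::'a) = 0" and "\<And>i j. e i j \<in> K"
  obtains r where "\<And>i j. r i j \<in> K" and "\<And>i j. e i j = (r i j)^2"
proof -
  obtain s :: "'a \<Rightarrow> 'a" where "\<forall>x\<in>K. s x \<in> K \<and> (s x)^2 = x"
    using bchoice[of K "\<lambda>x r. r \<in> K \<and> r^2 = x"] finite_char2_subfield_sqrt[OF assms(1-3)] by blast
  then show thesis
    using assms(4) by (intro that[of "\<lambda>i j. s (e i j)"]) simp_all
qed

lemma alg_closed_quadratic_root:
  assumes "alg_closed TYPE('a::field)" and "A \<noteq> 0"
  shows "\<exists>X::'a. A*X^2 + B*X + C = 0"
proof -
  have "degree [:C,B,A:] > 0"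
    using assms(2) by simp
  then obtain x :: 'a where "poly [:C,B,A:] x = 0"
    using assms(1) unfolding alg_closed_def by blast
  then have "A*x^2 + B*x + C = 0"
    by (simp add: power2_eq_square algebra_simps)
  then show ?thesis by blast
qed

lemma alg_closed_sqrt:
  assumes "alg_closed TYPE('a::field)"
  shows "\<exists>r::'a. r^2 = x"
proof -
  obtain r :: 'a where "1 * r^2 + 0 * r + - x = 0"
    using alg_closed_quadratic_root[OF assms one_neq_zero] by blast
  then show ?thesis
    by (auto simp: algebra_simps)
qed

lemma alg_closed_coeff_roots:
  fixes e :: "nat \<Rightarrow> nat \<Rightarrow> 'a::field"
  assumes "alg_closed TYPE('a)"
  obtains r where "\<And>i j. e i j = (r i j)^2"
proof -
  obtain s :: "'a \<Rightarrow> 'a" where "\<forall>x. (s x)^2 = x"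
    using choice[of "\<lambda>x r. r^2 = x"] alg_closed_sqrt[OF assms] by blast
  then show thesis
    by (intro that[of "\<lambda>i j. s (e i j)"]) simp
qed

lemma alg_closed_cube_root_of_unity:
  assumes "alg_closed TYPE('a::field)"
  shows "\<exists>\<omega>::'a. \<omega>^2 + \<omega> + 1 = 0"
  using alg_closed_quadratic_root[OF assms one_neq_zero, of 1 1] by simp

lemma binary_quadratic_has_zero:
  assumes "alg_closed TYPE('a::field)"
  shows "\<exists>s t::'a. (s,t) \<noteq> (0,0) \<and> A*s^2 + B*s*t + C*t^2 = 0"
proof (cases "A = 0")
  case True
  then show ?thesis by (intro exI[of _ 1] exI[of _ 0]) simp
next
  case False
  then obtain X where "A*X^2 + B*X + C = 0"
    using alg_closed_quadratic_root[OF assms] by blast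
  then show ?thesis by (intro exI[of _ X] exI[of _ 1]) simp
qed

lemma qmonos_sum:
  "(\<Sum>(i,j)\<in>qmonos. f i j) = f 0 0 + f 0 1 + f 0 2 + f 0 3 + f 0 4 + f 1 0 + f 1 1 + f 1 2
     + f 1 3 + f 2 0 + f 2 1 + f 2 2 + f 3 0 + f 3 1 + (f 4 0 :: 'a::comm_monoid_add)"
proof -
  have "qmonos = Sigma {..4::nat} (\<lambda>i. {..4-i})"
    by (auto simp: qmonos_def)
  then have "(\<Sum>(i,j)\<in>qmonos. f i j) = (\<Sum>i\<le>4. \<Sum>j\<le>4-i. f i j)"
    by (simp add: sum.Sigma)
  then show ?thesis
    by (simp add: numeral_eq_Suc atMost_Suc ac_simps)
qed

lemma qeval_expand: "qeval c (x,y,z) =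
    c 0 0 * z^4 + c 0 1 * y * z^3 + c 0 2 * y^2 * z^2 + c 0 3 * y^3 * z + c 0 4 * y^4
  + c 1 0 * x * z^3 + c 1 1 * x * y * z^2 + c 1 2 * x * y^2 * z + c 1 3 * x * y^3
  + c 2 0 * x^2 * z^2 + c 2 1 * x^2 * y * z + c 2 2 * x^2 * y^2
  + c 3 0 * x^3 * z + c 3 1 * x^3 * y + c 4 0 * x^4"
  unfolding qeval_def by (simp add: qmonos_sum)

lemma qdx_expand: "qdx c (x,y,z) =
    c 1 0 * z^3 + c 1 1 * y * z^2 + c 1 2 * y^2 * z + c 1 3 * y^3
  + 2 * c 2 0 * x * z^2 + 2 * c 2 1 * x * y * z + 2 * c 2 2 * x * y^2
  + 3 * c 3 0 * x^2 * z + 3 * c 3 1 * x^2 * y + 4 * c 4 0 * x^3"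
  unfolding qdx_def by (simp add: qmonos_sum)

lemma qdy_expand: "qdy c (x,y,z) =
    c 0 1 * z^3 + 2 * c 0 2 * y * z^2 + 3 * c 0 3 * y^2 * z + 4 * c 0 4 * y^3
  + c 1 1 * x * z^2 + 2 * c 1 2 * x * y * z + 3 * c 1 3 * x * y^2
  + c 2 1 * x^2 * z + 2 * c 2 2 * x^2 * y + c 3 1 * x^3"
  unfolding qdy_def by (simp add: qmonos_sum)

lemma qdz_expand: "qdz c (x,y,z) =
    4 * c 0 0 * z^3 + 3 * c 0 1 * y * z^2 + 2 * c 0 2 * y^2 * z + c 0 3 * y^3
  + 3 * c 1 0 * x * z^2 + 2 * c 1 1 * x * y * z + c 1 2 * x * y^2
  + 2 * c 2 0 * x^2 * z + c 2 1 * x^2 * y + c 3 0 * x^3"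
  unfolding qdz_def by (simp add: qmonos_sum)

definition qsubst ::
    "(nat \<Rightarrow> nat \<Rightarrow> 'a::comm_ring_1) \<Rightarrow> (nat \<Rightarrow> nat \<Rightarrow> 'a) \<Rightarrow> nat \<Rightarrow> nat \<Rightarrow> 'a" where
  "qsubst c M i j =
    (if i = 0 \<and> j = 0 then
       c 0 0 * (M 2 2)^4 + c 0 1 * M 1 2 * (M 2 2)^3 + c 0 2 * (M 1 2)^2 * (M 2 2)^2
         + c 0 3 * (M 1 2)^3 * M 2 2 + c 0 4 * (M 1 2)^4 + c 1 0 * M 0 2 * (M 2 2)^3
         + c 1 1 * M 0 2 * M 1 2 * (M 2 2)^2 + c 1 2 * M 0 2 * (M 1 2)^2 * M 2 2
         + c 1 3 * M 0 2 * (M 1 2)^3 + c 2 0 * (M 0 2)^2 * (M 2 2)^2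
         + c 2 1 * (M 0 2)^2 * M 1 2 * M 2 2 + c 2 2 * (M 0 2)^2 * (M 1 2)^2
         + c 3 0 * (M 0 2)^3 * M 2 2 + c 3 1 * (M 0 2)^3 * M 1 2 + c 4 0 * (M 0 2)^4
     else if i = 0 \<and> j = 1 then
       4 * c 0 0 * M 2 1 * (M 2 2)^3 + c 0 1 * M 1 1 * (M 2 2)^3
         + 3 * c 0 1 * M 1 2 * M 2 1 * (M 2 2)^2 + 2 * c 0 2 * M 1 1 * M 1 2 * (M 2 2)^2
         + 2 * c 0 2 * (M 1 2)^2 * M 2 1 * M 2 2 + 3 * c 0 3 * M 1 1 * (M 1 2)^2 * M 2 2
         + c 0 3 * (M 1 2)^3 * M 2 1 + 4 * c 0 4 * M 1 1 * (M 1 2)^3 + c 1 0 * M 0 1 * (M 2 2)^3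
         + 3 * c 1 0 * M 0 2 * M 2 1 * (M 2 2)^2 + c 1 1 * M 0 1 * M 1 2 * (M 2 2)^2
         + c 1 1 * M 0 2 * M 1 1 * (M 2 2)^2 + 2 * c 1 1 * M 0 2 * M 1 2 * M 2 1 * M 2 2
         + c 1 2 * M 0 1 * (M 1 2)^2 * M 2 2 + 2 * c 1 2 * M 0 2 * M 1 1 * M 1 2 * M 2 2
         + c 1 2 * M 0 2 * (M 1 2)^2 * M 2 1 + c 1 3 * M 0 1 * (M 1 2)^3
         + 3 * c 1 3 * M 0 2 * M 1 1 * (M 1 2)^2 + 2 * c 2 0 * M 0 1 * M 0 2 * (M 2 2)^2
         + 2 * c 2 0 * (M 0 2)^2 * M 2 1 * M 2 2 + 2 * c 2 1 * M 0 1 * M 0 2 * M 1 2 * M 2 2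
         + c 2 1 * (M 0 2)^2 * M 1 1 * M 2 2 + c 2 1 * (M 0 2)^2 * M 1 2 * M 2 1
         + 2 * c 2 2 * M 0 1 * M 0 2 * (M 1 2)^2 + 2 * c 2 2 * (M 0 2)^2 * M 1 1 * M 1 2
         + 3 * c 3 0 * M 0 1 * (M 0 2)^2 * M 2 2 + c 3 0 * (M 0 2)^3 * M 2 1
         + 3 * c 3 1 * M 0 1 * (M 0 2)^2 * M 1 2 + c 3 1 * (M 0 2)^3 * M 1 1
         + 4 * c 4 0 * M 0 1 * (M 0 2)^3
     else if i = 0 \<and> j = 2 then
       6 * c 0 0 * (M 2 1)^2 * (M 2 2)^2 + 3 * c 0 1 * M 1 1 * M 2 1 * (M 2 2)^2
         + 3 * c 0 1 * M 1 2 * (M 2 1)^2 * M 2 2 + c 0 2 * (M 1 1)^2 * (M 2 2)^2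
         + 4 * c 0 2 * M 1 1 * M 1 2 * M 2 1 * M 2 2 + c 0 2 * (M 1 2)^2 * (M 2 1)^2
         + 3 * c 0 3 * (M 1 1)^2 * M 1 2 * M 2 2 + 3 * c 0 3 * M 1 1 * (M 1 2)^2 * M 2 1
         + 6 * c 0 4 * (M 1 1)^2 * (M 1 2)^2 + 3 * c 1 0 * M 0 1 * M 2 1 * (M 2 2)^2
         + 3 * c 1 0 * M 0 2 * (M 2 1)^2 * M 2 2 + c 1 1 * M 0 1 * M 1 1 * (M 2 2)^2
         + 2 * c 1 1 * M 0 1 * M 1 2 * M 2 1 * M 2 2 + 2 * c 1 1 * M 0 2 * M 1 1 * M 2 1 * M 2 2
         + c 1 1 * M 0 2 * M 1 2 * (M 2 1)^2 + 2 * c 1 2 * M 0 1 * M 1 1 * M 1 2 * M 2 2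
         + c 1 2 * M 0 1 * (M 1 2)^2 * M 2 1 + c 1 2 * M 0 2 * (M 1 1)^2 * M 2 2
         + 2 * c 1 2 * M 0 2 * M 1 1 * M 1 2 * M 2 1 + 3 * c 1 3 * M 0 1 * M 1 1 * (M 1 2)^2
         + 3 * c 1 3 * M 0 2 * (M 1 1)^2 * M 1 2 + c 2 0 * (M 0 1)^2 * (M 2 2)^2
         + 4 * c 2 0 * M 0 1 * M 0 2 * M 2 1 * M 2 2 + c 2 0 * (M 0 2)^2 * (M 2 1)^2
         + c 2 1 * (M 0 1)^2 * M 1 2 * M 2 2 + 2 * c 2 1 * M 0 1 * M 0 2 * M 1 1 * M 2 2
         + 2 * c 2 1 * M 0 1 * M 0 2 * M 1 2 * M 2 1 + c 2 1 * (M 0 2)^2 * M 1 1 * M 2 1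
         + c 2 2 * (M 0 1)^2 * (M 1 2)^2 + 4 * c 2 2 * M 0 1 * M 0 2 * M 1 1 * M 1 2
         + c 2 2 * (M 0 2)^2 * (M 1 1)^2 + 3 * c 3 0 * (M 0 1)^2 * M 0 2 * M 2 2
         + 3 * c 3 0 * M 0 1 * (M 0 2)^2 * M 2 1 + 3 * c 3 1 * (M 0 1)^2 * M 0 2 * M 1 2
         + 3 * c 3 1 * M 0 1 * (M 0 2)^2 * M 1 1 + 6 * c 4 0 * (M 0 1)^2 * (M 0 2)^2
     else if i = 0 \<and> j = 3 then
       4 * c 0 0 * (M 2 1)^3 * M 2 2 + 3 * c 0 1 * M 1 1 * (M 2 1)^2 * M 2 2
         + c 0 1 * M 1 2 * (M 2 1)^3 + 2 * c 0 2 * (M 1 1)^2 * M 2 1 * M 2 2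
         + 2 * c 0 2 * M 1 1 * M 1 2 * (M 2 1)^2 + c 0 3 * (M 1 1)^3 * M 2 2
         + 3 * c 0 3 * (M 1 1)^2 * M 1 2 * M 2 1 + 4 * c 0 4 * (M 1 1)^3 * M 1 2
         + 3 * c 1 0 * M 0 1 * (M 2 1)^2 * M 2 2 + c 1 0 * M 0 2 * (M 2 1)^3
         + 2 * c 1 1 * M 0 1 * M 1 1 * M 2 1 * M 2 2 + c 1 1 * M 0 1 * M 1 2 * (M 2 1)^2
         + c 1 1 * M 0 2 * M 1 1 * (M 2 1)^2 + c 1 2 * M 0 1 * (M 1 1)^2 * M 2 2
         + 2 * c 1 2 * M 0 1 * M 1 1 * M 1 2 * M 2 1 + c 1 2 * M 0 2 * (M 1 1)^2 * M 2 1
         + 3 * c 1 3 * M 0 1 * (M 1 1)^2 * M 1 2 + c 1 3 * M 0 2 * (M 1 1)^3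
         + 2 * c 2 0 * (M 0 1)^2 * M 2 1 * M 2 2 + 2 * c 2 0 * M 0 1 * M 0 2 * (M 2 1)^2
         + c 2 1 * (M 0 1)^2 * M 1 1 * M 2 2 + c 2 1 * (M 0 1)^2 * M 1 2 * M 2 1
         + 2 * c 2 1 * M 0 1 * M 0 2 * M 1 1 * M 2 1 + 2 * c 2 2 * (M 0 1)^2 * M 1 1 * M 1 2
         + 2 * c 2 2 * M 0 1 * M 0 2 * (M 1 1)^2 + c 3 0 * (M 0 1)^3 * M 2 2
         + 3 * c 3 0 * (M 0 1)^2 * M 0 2 * M 2 1 + c 3 1 * (M 0 1)^3 * M 1 2
         + 3 * c 3 1 * (M 0 1)^2 * M 0 2 * M 1 1 + 4 * c 4 0 * (M 0 1)^3 * M 0 2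
     else if i = 0 \<and> j = 4 then
       c 0 0 * (M 2 1)^4 + c 0 1 * M 1 1 * (M 2 1)^3 + c 0 2 * (M 1 1)^2 * (M 2 1)^2
         + c 0 3 * (M 1 1)^3 * M 2 1 + c 0 4 * (M 1 1)^4 + c 1 0 * M 0 1 * (M 2 1)^3
         + c 1 1 * M 0 1 * M 1 1 * (M 2 1)^2 + c 1 2 * M 0 1 * (M 1 1)^2 * M 2 1
         + c 1 3 * M 0 1 * (M 1 1)^3 + c 2 0 * (M 0 1)^2 * (M 2 1)^2
         + c 2 1 * (M 0 1)^2 * M 1 1 * M 2 1 + c 2 2 * (M 0 1)^2 * (M 1 1)^2
         + c 3 0 * (M 0 1)^3 * M 2 1 + c 3 1 * (M 0 1)^3 * M 1 1 + c 4 0 * (M 0 1)^4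
     else if i = 1 \<and> j = 0 then
       4 * c 0 0 * M 2 0 * (M 2 2)^3 + c 0 1 * M 1 0 * (M 2 2)^3
         + 3 * c 0 1 * M 1 2 * M 2 0 * (M 2 2)^2 + 2 * c 0 2 * M 1 0 * M 1 2 * (M 2 2)^2
         + 2 * c 0 2 * (M 1 2)^2 * M 2 0 * M 2 2 + 3 * c 0 3 * M 1 0 * (M 1 2)^2 * M 2 2
         + c 0 3 * (M 1 2)^3 * M 2 0 + 4 * c 0 4 * M 1 0 * (M 1 2)^3 + c 1 0 * M 0 0 * (M 2 2)^3
         + 3 * c 1 0 * M 0 2 * M 2 0 * (M 2 2)^2 + c 1 1 * M 0 0 * M 1 2 * (M 2 2)^2
         + c 1 1 * M 0 2 * M 1 0 * (M 2 2)^2 + 2 * c 1 1 * M 0 2 * M 1 2 * M 2 0 * M 2 2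
         + c 1 2 * M 0 0 * (M 1 2)^2 * M 2 2 + 2 * c 1 2 * M 0 2 * M 1 0 * M 1 2 * M 2 2
         + c 1 2 * M 0 2 * (M 1 2)^2 * M 2 0 + c 1 3 * M 0 0 * (M 1 2)^3
         + 3 * c 1 3 * M 0 2 * M 1 0 * (M 1 2)^2 + 2 * c 2 0 * M 0 0 * M 0 2 * (M 2 2)^2
         + 2 * c 2 0 * (M 0 2)^2 * M 2 0 * M 2 2 + 2 * c 2 1 * M 0 0 * M 0 2 * M 1 2 * M 2 2
         + c 2 1 * (M 0 2)^2 * M 1 0 * M 2 2 + c 2 1 * (M 0 2)^2 * M 1 2 * M 2 0
         + 2 * c 2 2 * M 0 0 * M 0 2 * (M 1 2)^2 + 2 * c 2 2 * (M 0 2)^2 * M 1 0 * M 1 2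
         + 3 * c 3 0 * M 0 0 * (M 0 2)^2 * M 2 2 + c 3 0 * (M 0 2)^3 * M 2 0
         + 3 * c 3 1 * M 0 0 * (M 0 2)^2 * M 1 2 + c 3 1 * (M 0 2)^3 * M 1 0
         + 4 * c 4 0 * M 0 0 * (M 0 2)^3
     else if i = 1 \<and> j = 1 then
       12 * c 0 0 * M 2 0 * M 2 1 * (M 2 2)^2 + 3 * c 0 1 * M 1 0 * M 2 1 * (M 2 2)^2
         + 3 * c 0 1 * M 1 1 * M 2 0 * (M 2 2)^2 + 6 * c 0 1 * M 1 2 * M 2 0 * M 2 1 * M 2 2
         + 2 * c 0 2 * M 1 0 * M 1 1 * (M 2 2)^2 + 4 * c 0 2 * M 1 0 * M 1 2 * M 2 1 * M 2 2
         + 4 * c 0 2 * M 1 1 * M 1 2 * M 2 0 * M 2 2 + 2 * c 0 2 * (M 1 2)^2 * M 2 0 * M 2 1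
         + 6 * c 0 3 * M 1 0 * M 1 1 * M 1 2 * M 2 2 + 3 * c 0 3 * M 1 0 * (M 1 2)^2 * M 2 1
         + 3 * c 0 3 * M 1 1 * (M 1 2)^2 * M 2 0 + 12 * c 0 4 * M 1 0 * M 1 1 * (M 1 2)^2
         + 3 * c 1 0 * M 0 0 * M 2 1 * (M 2 2)^2 + 3 * c 1 0 * M 0 1 * M 2 0 * (M 2 2)^2
         + 6 * c 1 0 * M 0 2 * M 2 0 * M 2 1 * M 2 2 + c 1 1 * M 0 0 * M 1 1 * (M 2 2)^2
         + 2 * c 1 1 * M 0 0 * M 1 2 * M 2 1 * M 2 2 + c 1 1 * M 0 1 * M 1 0 * (M 2 2)^2
         + 2 * c 1 1 * M 0 1 * M 1 2 * M 2 0 * M 2 2 + 2 * c 1 1 * M 0 2 * M 1 0 * M 2 1 * M 2 2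
         + 2 * c 1 1 * M 0 2 * M 1 1 * M 2 0 * M 2 2 + 2 * c 1 1 * M 0 2 * M 1 2 * M 2 0 * M 2 1
         + 2 * c 1 2 * M 0 0 * M 1 1 * M 1 2 * M 2 2 + c 1 2 * M 0 0 * (M 1 2)^2 * M 2 1
         + 2 * c 1 2 * M 0 1 * M 1 0 * M 1 2 * M 2 2 + c 1 2 * M 0 1 * (M 1 2)^2 * M 2 0
         + 2 * c 1 2 * M 0 2 * M 1 0 * M 1 1 * M 2 2 + 2 * c 1 2 * M 0 2 * M 1 0 * M 1 2 * M 2 1
         + 2 * c 1 2 * M 0 2 * M 1 1 * M 1 2 * M 2 0 + 3 * c 1 3 * M 0 0 * M 1 1 * (M 1 2)^2
         + 3 * c 1 3 * M 0 1 * M 1 0 * (M 1 2)^2 + 6 * c 1 3 * M 0 2 * M 1 0 * M 1 1 * M 1 2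
         + 2 * c 2 0 * M 0 0 * M 0 1 * (M 2 2)^2 + 4 * c 2 0 * M 0 0 * M 0 2 * M 2 1 * M 2 2
         + 4 * c 2 0 * M 0 1 * M 0 2 * M 2 0 * M 2 2 + 2 * c 2 0 * (M 0 2)^2 * M 2 0 * M 2 1
         + 2 * c 2 1 * M 0 0 * M 0 1 * M 1 2 * M 2 2 + 2 * c 2 1 * M 0 0 * M 0 2 * M 1 1 * M 2 2
         + 2 * c 2 1 * M 0 0 * M 0 2 * M 1 2 * M 2 1 + 2 * c 2 1 * M 0 1 * M 0 2 * M 1 0 * M 2 2
         + 2 * c 2 1 * M 0 1 * M 0 2 * M 1 2 * M 2 0 + c 2 1 * (M 0 2)^2 * M 1 0 * M 2 1
         + c 2 1 * (M 0 2)^2 * M 1 1 * M 2 0 + 2 * c 2 2 * M 0 0 * M 0 1 * (M 1 2)^2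
         + 4 * c 2 2 * M 0 0 * M 0 2 * M 1 1 * M 1 2 + 4 * c 2 2 * M 0 1 * M 0 2 * M 1 0 * M 1 2
         + 2 * c 2 2 * (M 0 2)^2 * M 1 0 * M 1 1 + 6 * c 3 0 * M 0 0 * M 0 1 * M 0 2 * M 2 2
         + 3 * c 3 0 * M 0 0 * (M 0 2)^2 * M 2 1 + 3 * c 3 0 * M 0 1 * (M 0 2)^2 * M 2 0
         + 6 * c 3 1 * M 0 0 * M 0 1 * M 0 2 * M 1 2 + 3 * c 3 1 * M 0 0 * (M 0 2)^2 * M 1 1
         + 3 * c 3 1 * M 0 1 * (M 0 2)^2 * M 1 0 + 12 * c 4 0 * M 0 0 * M 0 1 * (M 0 2)^2
     else if i = 1 \<and> j = 2 then
       12 * c 0 0 * M 2 0 * (M 2 1)^2 * M 2 2 + 3 * c 0 1 * M 1 0 * (M 2 1)^2 * M 2 2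
         + 6 * c 0 1 * M 1 1 * M 2 0 * M 2 1 * M 2 2 + 3 * c 0 1 * M 1 2 * M 2 0 * (M 2 1)^2
         + 4 * c 0 2 * M 1 0 * M 1 1 * M 2 1 * M 2 2 + 2 * c 0 2 * M 1 0 * M 1 2 * (M 2 1)^2
         + 2 * c 0 2 * (M 1 1)^2 * M 2 0 * M 2 2 + 4 * c 0 2 * M 1 1 * M 1 2 * M 2 0 * M 2 1
         + 3 * c 0 3 * M 1 0 * (M 1 1)^2 * M 2 2 + 6 * c 0 3 * M 1 0 * M 1 1 * M 1 2 * M 2 1
         + 3 * c 0 3 * (M 1 1)^2 * M 1 2 * M 2 0 + 12 * c 0 4 * M 1 0 * (M 1 1)^2 * M 1 2
         + 3 * c 1 0 * M 0 0 * (M 2 1)^2 * M 2 2 + 6 * c 1 0 * M 0 1 * M 2 0 * M 2 1 * M 2 2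
         + 3 * c 1 0 * M 0 2 * M 2 0 * (M 2 1)^2 + 2 * c 1 1 * M 0 0 * M 1 1 * M 2 1 * M 2 2
         + c 1 1 * M 0 0 * M 1 2 * (M 2 1)^2 + 2 * c 1 1 * M 0 1 * M 1 0 * M 2 1 * M 2 2
         + 2 * c 1 1 * M 0 1 * M 1 1 * M 2 0 * M 2 2 + 2 * c 1 1 * M 0 1 * M 1 2 * M 2 0 * M 2 1
         + c 1 1 * M 0 2 * M 1 0 * (M 2 1)^2 + 2 * c 1 1 * M 0 2 * M 1 1 * M 2 0 * M 2 1
         + c 1 2 * M 0 0 * (M 1 1)^2 * M 2 2 + 2 * c 1 2 * M 0 0 * M 1 1 * M 1 2 * M 2 1
         + 2 * c 1 2 * M 0 1 * M 1 0 * M 1 1 * M 2 2 + 2 * c 1 2 * M 0 1 * M 1 0 * M 1 2 * M 2 1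
         + 2 * c 1 2 * M 0 1 * M 1 1 * M 1 2 * M 2 0 + 2 * c 1 2 * M 0 2 * M 1 0 * M 1 1 * M 2 1
         + c 1 2 * M 0 2 * (M 1 1)^2 * M 2 0 + 3 * c 1 3 * M 0 0 * (M 1 1)^2 * M 1 2
         + 6 * c 1 3 * M 0 1 * M 1 0 * M 1 1 * M 1 2 + 3 * c 1 3 * M 0 2 * M 1 0 * (M 1 1)^2
         + 4 * c 2 0 * M 0 0 * M 0 1 * M 2 1 * M 2 2 + 2 * c 2 0 * M 0 0 * M 0 2 * (M 2 1)^2
         + 2 * c 2 0 * (M 0 1)^2 * M 2 0 * M 2 2 + 4 * c 2 0 * M 0 1 * M 0 2 * M 2 0 * M 2 1
         + 2 * c 2 1 * M 0 0 * M 0 1 * M 1 1 * M 2 2 + 2 * c 2 1 * M 0 0 * M 0 1 * M 1 2 * M 2 1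
         + 2 * c 2 1 * M 0 0 * M 0 2 * M 1 1 * M 2 1 + c 2 1 * (M 0 1)^2 * M 1 0 * M 2 2
         + c 2 1 * (M 0 1)^2 * M 1 2 * M 2 0 + 2 * c 2 1 * M 0 1 * M 0 2 * M 1 0 * M 2 1
         + 2 * c 2 1 * M 0 1 * M 0 2 * M 1 1 * M 2 0 + 4 * c 2 2 * M 0 0 * M 0 1 * M 1 1 * M 1 2
         + 2 * c 2 2 * M 0 0 * M 0 2 * (M 1 1)^2 + 2 * c 2 2 * (M 0 1)^2 * M 1 0 * M 1 2
         + 4 * c 2 2 * M 0 1 * M 0 2 * M 1 0 * M 1 1 + 3 * c 3 0 * M 0 0 * (M 0 1)^2 * M 2 2
         + 6 * c 3 0 * M 0 0 * M 0 1 * M 0 2 * M 2 1 + 3 * c 3 0 * (M 0 1)^2 * M 0 2 * M 2 0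
         + 3 * c 3 1 * M 0 0 * (M 0 1)^2 * M 1 2 + 6 * c 3 1 * M 0 0 * M 0 1 * M 0 2 * M 1 1
         + 3 * c 3 1 * (M 0 1)^2 * M 0 2 * M 1 0 + 12 * c 4 0 * M 0 0 * (M 0 1)^2 * M 0 2
     else if i = 1 \<and> j = 3 then
       4 * c 0 0 * M 2 0 * (M 2 1)^3 + c 0 1 * M 1 0 * (M 2 1)^3
         + 3 * c 0 1 * M 1 1 * M 2 0 * (M 2 1)^2 + 2 * c 0 2 * M 1 0 * M 1 1 * (M 2 1)^2
         + 2 * c 0 2 * (M 1 1)^2 * M 2 0 * M 2 1 + 3 * c 0 3 * M 1 0 * (M 1 1)^2 * M 2 1
         + c 0 3 * (M 1 1)^3 * M 2 0 + 4 * c 0 4 * M 1 0 * (M 1 1)^3 + c 1 0 * M 0 0 * (M 2 1)^3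
         + 3 * c 1 0 * M 0 1 * M 2 0 * (M 2 1)^2 + c 1 1 * M 0 0 * M 1 1 * (M 2 1)^2
         + c 1 1 * M 0 1 * M 1 0 * (M 2 1)^2 + 2 * c 1 1 * M 0 1 * M 1 1 * M 2 0 * M 2 1
         + c 1 2 * M 0 0 * (M 1 1)^2 * M 2 1 + 2 * c 1 2 * M 0 1 * M 1 0 * M 1 1 * M 2 1
         + c 1 2 * M 0 1 * (M 1 1)^2 * M 2 0 + c 1 3 * M 0 0 * (M 1 1)^3
         + 3 * c 1 3 * M 0 1 * M 1 0 * (M 1 1)^2 + 2 * c 2 0 * M 0 0 * M 0 1 * (M 2 1)^2
         + 2 * c 2 0 * (M 0 1)^2 * M 2 0 * M 2 1 + 2 * c 2 1 * M 0 0 * M 0 1 * M 1 1 * M 2 1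
         + c 2 1 * (M 0 1)^2 * M 1 0 * M 2 1 + c 2 1 * (M 0 1)^2 * M 1 1 * M 2 0
         + 2 * c 2 2 * M 0 0 * M 0 1 * (M 1 1)^2 + 2 * c 2 2 * (M 0 1)^2 * M 1 0 * M 1 1
         + 3 * c 3 0 * M 0 0 * (M 0 1)^2 * M 2 1 + c 3 0 * (M 0 1)^3 * M 2 0
         + 3 * c 3 1 * M 0 0 * (M 0 1)^2 * M 1 1 + c 3 1 * (M 0 1)^3 * M 1 0
         + 4 * c 4 0 * M 0 0 * (M 0 1)^3
     else if i = 2 \<and> j = 0 then
       6 * c 0 0 * (M 2 0)^2 * (M 2 2)^2 + 3 * c 0 1 * M 1 0 * M 2 0 * (M 2 2)^2
         + 3 * c 0 1 * M 1 2 * (M 2 0)^2 * M 2 2 + c 0 2 * (M 1 0)^2 * (M 2 2)^2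
         + 4 * c 0 2 * M 1 0 * M 1 2 * M 2 0 * M 2 2 + c 0 2 * (M 1 2)^2 * (M 2 0)^2
         + 3 * c 0 3 * (M 1 0)^2 * M 1 2 * M 2 2 + 3 * c 0 3 * M 1 0 * (M 1 2)^2 * M 2 0
         + 6 * c 0 4 * (M 1 0)^2 * (M 1 2)^2 + 3 * c 1 0 * M 0 0 * M 2 0 * (M 2 2)^2
         + 3 * c 1 0 * M 0 2 * (M 2 0)^2 * M 2 2 + c 1 1 * M 0 0 * M 1 0 * (M 2 2)^2
         + 2 * c 1 1 * M 0 0 * M 1 2 * M 2 0 * M 2 2 + 2 * c 1 1 * M 0 2 * M 1 0 * M 2 0 * M 2 2
         + c 1 1 * M 0 2 * M 1 2 * (M 2 0)^2 + 2 * c 1 2 * M 0 0 * M 1 0 * M 1 2 * M 2 2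
         + c 1 2 * M 0 0 * (M 1 2)^2 * M 2 0 + c 1 2 * M 0 2 * (M 1 0)^2 * M 2 2
         + 2 * c 1 2 * M 0 2 * M 1 0 * M 1 2 * M 2 0 + 3 * c 1 3 * M 0 0 * M 1 0 * (M 1 2)^2
         + 3 * c 1 3 * M 0 2 * (M 1 0)^2 * M 1 2 + c 2 0 * (M 0 0)^2 * (M 2 2)^2
         + 4 * c 2 0 * M 0 0 * M 0 2 * M 2 0 * M 2 2 + c 2 0 * (M 0 2)^2 * (M 2 0)^2
         + c 2 1 * (M 0 0)^2 * M 1 2 * M 2 2 + 2 * c 2 1 * M 0 0 * M 0 2 * M 1 0 * M 2 2
         + 2 * c 2 1 * M 0 0 * M 0 2 * M 1 2 * M 2 0 + c 2 1 * (M 0 2)^2 * M 1 0 * M 2 0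
         + c 2 2 * (M 0 0)^2 * (M 1 2)^2 + 4 * c 2 2 * M 0 0 * M 0 2 * M 1 0 * M 1 2
         + c 2 2 * (M 0 2)^2 * (M 1 0)^2 + 3 * c 3 0 * (M 0 0)^2 * M 0 2 * M 2 2
         + 3 * c 3 0 * M 0 0 * (M 0 2)^2 * M 2 0 + 3 * c 3 1 * (M 0 0)^2 * M 0 2 * M 1 2
         + 3 * c 3 1 * M 0 0 * (M 0 2)^2 * M 1 0 + 6 * c 4 0 * (M 0 0)^2 * (M 0 2)^2
     else if i = 2 \<and> j = 1 then
       12 * c 0 0 * (M 2 0)^2 * M 2 1 * M 2 2 + 6 * c 0 1 * M 1 0 * M 2 0 * M 2 1 * M 2 2
         + 3 * c 0 1 * M 1 1 * (M 2 0)^2 * M 2 2 + 3 * c 0 1 * M 1 2 * (M 2 0)^2 * M 2 1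
         + 2 * c 0 2 * (M 1 0)^2 * M 2 1 * M 2 2 + 4 * c 0 2 * M 1 0 * M 1 1 * M 2 0 * M 2 2
         + 4 * c 0 2 * M 1 0 * M 1 2 * M 2 0 * M 2 1 + 2 * c 0 2 * M 1 1 * M 1 2 * (M 2 0)^2
         + 3 * c 0 3 * (M 1 0)^2 * M 1 1 * M 2 2 + 3 * c 0 3 * (M 1 0)^2 * M 1 2 * M 2 1
         + 6 * c 0 3 * M 1 0 * M 1 1 * M 1 2 * M 2 0 + 12 * c 0 4 * (M 1 0)^2 * M 1 1 * M 1 2
         + 6 * c 1 0 * M 0 0 * M 2 0 * M 2 1 * M 2 2 + 3 * c 1 0 * M 0 1 * (M 2 0)^2 * M 2 2
         + 3 * c 1 0 * M 0 2 * (M 2 0)^2 * M 2 1 + 2 * c 1 1 * M 0 0 * M 1 0 * M 2 1 * M 2 2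
         + 2 * c 1 1 * M 0 0 * M 1 1 * M 2 0 * M 2 2 + 2 * c 1 1 * M 0 0 * M 1 2 * M 2 0 * M 2 1
         + 2 * c 1 1 * M 0 1 * M 1 0 * M 2 0 * M 2 2 + c 1 1 * M 0 1 * M 1 2 * (M 2 0)^2
         + 2 * c 1 1 * M 0 2 * M 1 0 * M 2 0 * M 2 1 + c 1 1 * M 0 2 * M 1 1 * (M 2 0)^2
         + 2 * c 1 2 * M 0 0 * M 1 0 * M 1 1 * M 2 2 + 2 * c 1 2 * M 0 0 * M 1 0 * M 1 2 * M 2 1
         + 2 * c 1 2 * M 0 0 * M 1 1 * M 1 2 * M 2 0 + c 1 2 * M 0 1 * (M 1 0)^2 * M 2 2
         + 2 * c 1 2 * M 0 1 * M 1 0 * M 1 2 * M 2 0 + c 1 2 * M 0 2 * (M 1 0)^2 * M 2 1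
         + 2 * c 1 2 * M 0 2 * M 1 0 * M 1 1 * M 2 0 + 6 * c 1 3 * M 0 0 * M 1 0 * M 1 1 * M 1 2
         + 3 * c 1 3 * M 0 1 * (M 1 0)^2 * M 1 2 + 3 * c 1 3 * M 0 2 * (M 1 0)^2 * M 1 1
         + 2 * c 2 0 * (M 0 0)^2 * M 2 1 * M 2 2 + 4 * c 2 0 * M 0 0 * M 0 1 * M 2 0 * M 2 2
         + 4 * c 2 0 * M 0 0 * M 0 2 * M 2 0 * M 2 1 + 2 * c 2 0 * M 0 1 * M 0 2 * (M 2 0)^2
         + c 2 1 * (M 0 0)^2 * M 1 1 * M 2 2 + c 2 1 * (M 0 0)^2 * M 1 2 * M 2 1
         + 2 * c 2 1 * M 0 0 * M 0 1 * M 1 0 * M 2 2 + 2 * c 2 1 * M 0 0 * M 0 1 * M 1 2 * M 2 0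
         + 2 * c 2 1 * M 0 0 * M 0 2 * M 1 0 * M 2 1 + 2 * c 2 1 * M 0 0 * M 0 2 * M 1 1 * M 2 0
         + 2 * c 2 1 * M 0 1 * M 0 2 * M 1 0 * M 2 0 + 2 * c 2 2 * (M 0 0)^2 * M 1 1 * M 1 2
         + 4 * c 2 2 * M 0 0 * M 0 1 * M 1 0 * M 1 2 + 4 * c 2 2 * M 0 0 * M 0 2 * M 1 0 * M 1 1
         + 2 * c 2 2 * M 0 1 * M 0 2 * (M 1 0)^2 + 3 * c 3 0 * (M 0 0)^2 * M 0 1 * M 2 2
         + 3 * c 3 0 * (M 0 0)^2 * M 0 2 * M 2 1 + 6 * c 3 0 * M 0 0 * M 0 1 * M 0 2 * M 2 0
         + 3 * c 3 1 * (M 0 0)^2 * M 0 1 * M 1 2 + 3 * c 3 1 * (M 0 0)^2 * M 0 2 * M 1 1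
         + 6 * c 3 1 * M 0 0 * M 0 1 * M 0 2 * M 1 0 + 12 * c 4 0 * (M 0 0)^2 * M 0 1 * M 0 2
     else if i = 2 \<and> j = 2 then
       6 * c 0 0 * (M 2 0)^2 * (M 2 1)^2 + 3 * c 0 1 * M 1 0 * M 2 0 * (M 2 1)^2
         + 3 * c 0 1 * M 1 1 * (M 2 0)^2 * M 2 1 + c 0 2 * (M 1 0)^2 * (M 2 1)^2
         + 4 * c 0 2 * M 1 0 * M 1 1 * M 2 0 * M 2 1 + c 0 2 * (M 1 1)^2 * (M 2 0)^2
         + 3 * c 0 3 * (M 1 0)^2 * M 1 1 * M 2 1 + 3 * c 0 3 * M 1 0 * (M 1 1)^2 * M 2 0
         + 6 * c 0 4 * (M 1 0)^2 * (M 1 1)^2 + 3 * c 1 0 * M 0 0 * M 2 0 * (M 2 1)^2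
         + 3 * c 1 0 * M 0 1 * (M 2 0)^2 * M 2 1 + c 1 1 * M 0 0 * M 1 0 * (M 2 1)^2
         + 2 * c 1 1 * M 0 0 * M 1 1 * M 2 0 * M 2 1 + 2 * c 1 1 * M 0 1 * M 1 0 * M 2 0 * M 2 1
         + c 1 1 * M 0 1 * M 1 1 * (M 2 0)^2 + 2 * c 1 2 * M 0 0 * M 1 0 * M 1 1 * M 2 1
         + c 1 2 * M 0 0 * (M 1 1)^2 * M 2 0 + c 1 2 * M 0 1 * (M 1 0)^2 * M 2 1
         + 2 * c 1 2 * M 0 1 * M 1 0 * M 1 1 * M 2 0 + 3 * c 1 3 * M 0 0 * M 1 0 * (M 1 1)^2
         + 3 * c 1 3 * M 0 1 * (M 1 0)^2 * M 1 1 + c 2 0 * (M 0 0)^2 * (M 2 1)^2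
         + 4 * c 2 0 * M 0 0 * M 0 1 * M 2 0 * M 2 1 + c 2 0 * (M 0 1)^2 * (M 2 0)^2
         + c 2 1 * (M 0 0)^2 * M 1 1 * M 2 1 + 2 * c 2 1 * M 0 0 * M 0 1 * M 1 0 * M 2 1
         + 2 * c 2 1 * M 0 0 * M 0 1 * M 1 1 * M 2 0 + c 2 1 * (M 0 1)^2 * M 1 0 * M 2 0
         + c 2 2 * (M 0 0)^2 * (M 1 1)^2 + 4 * c 2 2 * M 0 0 * M 0 1 * M 1 0 * M 1 1
         + c 2 2 * (M 0 1)^2 * (M 1 0)^2 + 3 * c 3 0 * (M 0 0)^2 * M 0 1 * M 2 1
         + 3 * c 3 0 * M 0 0 * (M 0 1)^2 * M 2 0 + 3 * c 3 1 * (M 0 0)^2 * M 0 1 * M 1 1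
         + 3 * c 3 1 * M 0 0 * (M 0 1)^2 * M 1 0 + 6 * c 4 0 * (M 0 0)^2 * (M 0 1)^2
     else if i = 3 \<and> j = 0 then
       4 * c 0 0 * (M 2 0)^3 * M 2 2 + 3 * c 0 1 * M 1 0 * (M 2 0)^2 * M 2 2
         + c 0 1 * M 1 2 * (M 2 0)^3 + 2 * c 0 2 * (M 1 0)^2 * M 2 0 * M 2 2
         + 2 * c 0 2 * M 1 0 * M 1 2 * (M 2 0)^2 + c 0 3 * (M 1 0)^3 * M 2 2
         + 3 * c 0 3 * (M 1 0)^2 * M 1 2 * M 2 0 + 4 * c 0 4 * (M 1 0)^3 * M 1 2
         + 3 * c 1 0 * M 0 0 * (M 2 0)^2 * M 2 2 + c 1 0 * M 0 2 * (M 2 0)^3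
         + 2 * c 1 1 * M 0 0 * M 1 0 * M 2 0 * M 2 2 + c 1 1 * M 0 0 * M 1 2 * (M 2 0)^2
         + c 1 1 * M 0 2 * M 1 0 * (M 2 0)^2 + c 1 2 * M 0 0 * (M 1 0)^2 * M 2 2
         + 2 * c 1 2 * M 0 0 * M 1 0 * M 1 2 * M 2 0 + c 1 2 * M 0 2 * (M 1 0)^2 * M 2 0
         + 3 * c 1 3 * M 0 0 * (M 1 0)^2 * M 1 2 + c 1 3 * M 0 2 * (M 1 0)^3
         + 2 * c 2 0 * (M 0 0)^2 * M 2 0 * M 2 2 + 2 * c 2 0 * M 0 0 * M 0 2 * (M 2 0)^2
         + c 2 1 * (M 0 0)^2 * M 1 0 * M 2 2 + c 2 1 * (M 0 0)^2 * M 1 2 * M 2 0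
         + 2 * c 2 1 * M 0 0 * M 0 2 * M 1 0 * M 2 0 + 2 * c 2 2 * (M 0 0)^2 * M 1 0 * M 1 2
         + 2 * c 2 2 * M 0 0 * M 0 2 * (M 1 0)^2 + c 3 0 * (M 0 0)^3 * M 2 2
         + 3 * c 3 0 * (M 0 0)^2 * M 0 2 * M 2 0 + c 3 1 * (M 0 0)^3 * M 1 2
         + 3 * c 3 1 * (M 0 0)^2 * M 0 2 * M 1 0 + 4 * c 4 0 * (M 0 0)^3 * M 0 2
     else if i = 3 \<and> j = 1 then
       4 * c 0 0 * (M 2 0)^3 * M 2 1 + 3 * c 0 1 * M 1 0 * (M 2 0)^2 * M 2 1
         + c 0 1 * M 1 1 * (M 2 0)^3 + 2 * c 0 2 * (M 1 0)^2 * M 2 0 * M 2 1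
         + 2 * c 0 2 * M 1 0 * M 1 1 * (M 2 0)^2 + c 0 3 * (M 1 0)^3 * M 2 1
         + 3 * c 0 3 * (M 1 0)^2 * M 1 1 * M 2 0 + 4 * c 0 4 * (M 1 0)^3 * M 1 1
         + 3 * c 1 0 * M 0 0 * (M 2 0)^2 * M 2 1 + c 1 0 * M 0 1 * (M 2 0)^3
         + 2 * c 1 1 * M 0 0 * M 1 0 * M 2 0 * M 2 1 + c 1 1 * M 0 0 * M 1 1 * (M 2 0)^2
         + c 1 1 * M 0 1 * M 1 0 * (M 2 0)^2 + c 1 2 * M 0 0 * (M 1 0)^2 * M 2 1
         + 2 * c 1 2 * M 0 0 * M 1 0 * M 1 1 * M 2 0 + c 1 2 * M 0 1 * (M 1 0)^2 * M 2 0
         + 3 * c 1 3 * M 0 0 * (M 1 0)^2 * M 1 1 + c 1 3 * M 0 1 * (M 1 0)^3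
         + 2 * c 2 0 * (M 0 0)^2 * M 2 0 * M 2 1 + 2 * c 2 0 * M 0 0 * M 0 1 * (M 2 0)^2
         + c 2 1 * (M 0 0)^2 * M 1 0 * M 2 1 + c 2 1 * (M 0 0)^2 * M 1 1 * M 2 0
         + 2 * c 2 1 * M 0 0 * M 0 1 * M 1 0 * M 2 0 + 2 * c 2 2 * (M 0 0)^2 * M 1 0 * M 1 1
         + 2 * c 2 2 * M 0 0 * M 0 1 * (M 1 0)^2 + c 3 0 * (M 0 0)^3 * M 2 1
         + 3 * c 3 0 * (M 0 0)^2 * M 0 1 * M 2 0 + c 3 1 * (M 0 0)^3 * M 1 1
         + 3 * c 3 1 * (M 0 0)^2 * M 0 1 * M 1 0 + 4 * c 4 0 * (M 0 0)^3 * M 0 1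
     else if i = 4 \<and> j = 0 then
       c 0 0 * (M 2 0)^4 + c 0 1 * M 1 0 * (M 2 0)^3 + c 0 2 * (M 1 0)^2 * (M 2 0)^2
         + c 0 3 * (M 1 0)^3 * M 2 0 + c 0 4 * (M 1 0)^4 + c 1 0 * M 0 0 * (M 2 0)^3
         + c 1 1 * M 0 0 * M 1 0 * (M 2 0)^2 + c 1 2 * M 0 0 * (M 1 0)^2 * M 2 0
         + c 1 3 * M 0 0 * (M 1 0)^3 + c 2 0 * (M 0 0)^2 * (M 2 0)^2
         + c 2 1 * (M 0 0)^2 * M 1 0 * M 2 0 + c 2 2 * (M 0 0)^2 * (M 1 0)^2
         + c 3 0 * (M 0 0)^3 * M 2 0 + c 3 1 * (M 0 0)^3 * M 1 0 + c 4 0 * (M 0 0)^4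
     else 0)"

lemma qeval_qsubst:
  fixes c :: "nat \<Rightarrow> nat \<Rightarrow> 'a::idom"
  shows "qeval (qsubst c M) p = qeval c (lin M p)"
  by (induction p rule: prod_induct3)
    (simp only: qeval_expand lin_def prod.case qsubst_def if_True if_False simp_thms
      nat.distinct zero_neq_numeral numeral_eq_iff semiring_norm, algebra)

lemma qsubst_over:
  assumes sf: "is_subfield K" and cK: "\<forall>i j. i + j \<le> 4 \<longrightarrow> c i j \<in> K"
    and MK: "\<forall>i<3. \<forall>j<3. M i j \<in> K"
  shows "qsubst c M i j \<in> K"
proof -
  have c: "c 0 0 \<in> K" "c 0 1 \<in> K" "c 0 2 \<in> K" "c 0 3 \<in> K" "c 0 4 \<in> K" "c 1 0 \<in> K" "c 1 1 \<in> K"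
    "c 1 2 \<in> K" "c 1 3 \<in> K" "c 2 0 \<in> K" "c 2 1 \<in> K" "c 2 2 \<in> K" "c 3 0 \<in> K" "c 3 1 \<in> K"
    "c 4 0 \<in> K"
    using cK by auto
  have M: "M 0 0 \<in> K" "M 0 1 \<in> K" "M 0 2 \<in> K" "M 1 0 \<in> K" "M 1 1 \<in> K" "M 1 2 \<in> K"
    "M 2 0 \<in> K" "M 2 1 \<in> K" "M 2 2 \<in> K"
    using MK by auto
  have if_K: "(P \<Longrightarrow> x \<in> K) \<Longrightarrow> (\<not> P \<Longrightarrow> y \<in> K) \<Longrightarrow> (if P then x else y) \<in> K" for P x y
    by auto
  show ?thesis
    unfolding qsubst_def
    by (intro if_K subfield_add[OF sf] subfield_mult[OF sf] subfield_power[OF sf] subfield_numeral[OF sf]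
        subfield_zero[OF sf] c M)
qed

definition dot :: "'a::comm_ring_1 pt \<Rightarrow> 'a pt \<Rightarrow> 'a" where
  "dot u p = (case u of (a,b,d) \<Rightarrow> case p of (x,y,z) \<Rightarrow> a*x + b*y + d*z)"

definition transpose3 :: "(nat \<Rightarrow> nat \<Rightarrow> 'a) \<Rightarrow> nat \<Rightarrow> nat \<Rightarrow> 'a" where
  "transpose3 M i j = M j i"

definition adjugate3 :: "(nat \<Rightarrow> nat \<Rightarrow> 'a::comm_ring_1) \<Rightarrow> nat \<Rightarrow> nat \<Rightarrow> 'a" where
  "adjugate3 M i j = (if i = 0 \<and> j = 0 then M 1 1 * M 2 2 - M 1 2 * M 2 1 else
                      if i = 0 \<and> j = 1 then M 0 2 * M 2 1 - M 0 1 * M 2 2 else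
                      if i = 0 \<and> j = 2 then M 0 1 * M 1 2 - M 0 2 * M 1 1 else
                      if i = 1 \<and> j = 0 then M 1 2 * M 2 0 - M 1 0 * M 2 2 else
                      if i = 1 \<and> j = 1 then M 0 0 * M 2 2 - M 0 2 * M 2 0 else
                      if i = 1 \<and> j = 2 then M 0 2 * M 1 0 - M 0 0 * M 1 2 else
                      if i = 2 \<and> j = 0 then M 1 0 * M 2 1 - M 1 1 * M 2 0 else
                      if i = 2 \<and> j = 1 then M 0 1 * M 2 0 - M 0 0 * M 2 1 else
                      M 0 0 * M 1 1 - M 0 1 * M 1 0)"

definition pt_over :: "'a set \<Rightarrow> 'a pt \<Rightarrow> bool" where
  "pt_over K p \<longleftrightarrow> (case p of (x,y,z) \<Rightarrow> x \<in> K \<and> y \<in> K \<and> z \<in> K)"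

lemma adjugate3_simps:
  "adjugate3 M 0 0 = M 1 1 * M 2 2 - M 1 2 * M 2 1" "adjugate3 M 0 1 = M 0 2 * M 2 1 - M 0 1 * M 2 2"
  "adjugate3 M 0 2 = M 0 1 * M 1 2 - M 0 2 * M 1 1" "adjugate3 M 1 0 = M 1 2 * M 2 0 - M 1 0 * M 2 2"
  "adjugate3 M 1 1 = M 0 0 * M 2 2 - M 0 2 * M 2 0" "adjugate3 M 1 2 = M 0 2 * M 1 0 - M 0 0 * M 1 2"
  "adjugate3 M 2 0 = M 1 0 * M 2 1 - M 1 1 * M 2 0" "adjugate3 M 2 1 = M 0 1 * M 2 0 - M 0 0 * M 2 1"
  "adjugate3 M 2 2 = M 0 0 * M 1 1 - M 0 1 * M 1 0"
  by (simp_all add: adjugate3_def)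

lemmas pt_defs = lin_def dot_def cross_def pt_add_def pt_scale_def transpose3_def adjugate3_simps
  det3_def prod.case

lemma line_set_dot: "line_set v = {p. dot v p = 0}"
  by (cases v) (auto simp: line_set_def dot_def)

lemma dot_lin: "dot v (lin M p) = dot (lin (transpose3 M) v) (p::'a::idom pt)"
  by (induction p rule: prod_induct3, induction v rule: prod_induct3) (simp only: pt_defs, algebra)

lemma dot_scale: "dot (pt_scale k v) p = k * dot v (p::'a::idom pt)"
  by (induction p rule: prod_induct3, induction v rule: prod_induct3) (simp only: pt_defs, algebra)

lemma dot_cross_left: "dot (cross A B) A = (0::'a::idom)"
  and dot_cross_right: "dot (cross A B) B = 0"
  by (induction A rule: prod_induct3, induction B rule: prod_induct3; simp only: pt_defs, algebra)+

lemma dot_cross_lin: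
  "dot (cross (lin M P) (lin M R)) (lin M X) = det3 M * dot (cross P R) (X::'a::idom pt)"
  by (induction P rule: prod_induct3, induction R rule: prod_induct3, induction X rule: prod_induct3)
    (simp only: pt_defs, algebra)

lemma lin_add: "lin M (pt_add p r) = pt_add (lin M p) (lin M (r::'a::idom pt))"
  by (induction p rule: prod_induct3, induction r rule: prod_induct3) (simp only: pt_defs prod.inject, algebra)

lemma lin_scale: "lin M (pt_scale t r) = pt_scale t (lin M (r::'a::idom pt))"
  by (induction r rule: prod_induct3) (simp only: pt_defs prod.inject, algebra)

lemma adjugate3_lin: "lin (adjugate3 M) (lin M p) = pt_scale (det3 M) (p::'a::idom pt)"
  by (induction p rule: prod_induct3) (simp only: pt_defs prod.inject, algebra)

lemma lin_adjugate3: "lin M (lin (adjugate3 M) p) = pt_scale (det3 M) (p::'a::idom pt)"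
  by (induction p rule: prod_induct3) (simp only: pt_defs prod.inject, algebra)

lemma det3_transpose3: "det3 (transpose3 M) = (det3 M :: 'a::idom)"
  by (simp only: pt_defs, algebra)

lemma cross_lin: "lin (transpose3 M) (cross (lin M p) (lin M r)) = pt_scale (det3 M) (cross p (r::'a::idom pt))"
  by (induction p rule: prod_induct3, induction r rule: prod_induct3) (simp only: pt_defs prod.inject, algebra)

lemma pt_scale_one: "pt_scale 1 p = (p::'a::comm_ring_1 pt)"
  by (cases p) (simp add: pt_scale_def)

lemma pt_scale_eq_0_iff: "pt_scale k v = (0,0,0) \<longleftrightarrow> k = 0 \<or> v = ((0,0,0)::'a::idom pt)"
  by (cases v) (auto simp: pt_scale_def)

lemma cross_lin_nonzero:
  fixes M :: "nat \<Rightarrow> nat \<Rightarrow> 'a::idom"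
  assumes "det3 M \<noteq> 0" and "cross P R \<noteq> (0,0,0)"
  shows "cross (lin M P) (lin M R) \<noteq> (0,0,0)"
proof
  assume "cross (lin M P) (lin M R) = (0,0,0)"
  then have "pt_scale (det3 M) (cross P R) = (0,0,0)"
    by (simp add: cross_lin[symmetric] lin_def)
  then show False
    using assms by (simp add: pt_scale_eq_0_iff)
qed

lemma line_set_scale: "k \<noteq> 0 \<Longrightarrow> line_set (pt_scale k v) = line_set (v::'a::idom pt)"
  by (simp add: line_set_dot dot_scale)

lemma lin_eq_0_iff:
  fixes M :: "nat \<Rightarrow> nat \<Rightarrow> 'a::idom"
  assumes "det3 M \<noteq> 0"
  shows "lin M p = (0,0,0) \<longleftrightarrow> p = (0,0,0)"
proof
  assume "lin M p = (0,0,0)"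
  then have "pt_scale (det3 M) p = (0,0,0)"
    by (simp add: adjugate3_lin[symmetric] lin_def)
  then show "p = (0,0,0)"
    using assms by (simp add: pt_scale_eq_0_iff)
qed (simp add: lin_def)

lemma lin_surj:
  fixes M :: "nat \<Rightarrow> nat \<Rightarrow> 'a::field"
  assumes "det3 M \<noteq> 0"
  shows "lin M (pt_scale (1 / det3 M) (lin (adjugate3 M) q)) = q"
  unfolding lin_scale lin_adjugate3 using assms by (cases q) (simp add: pt_scale_def)

lemma lin_image_line_set_scale:
  "k \<noteq> 0 \<Longrightarrow> lin M ` line_set (pt_scale k u) = lin M ` line_set (u::'a::idom pt)"
  by (simp add: line_set_scale)

lemma pt_over_lin:
  assumes "is_subfield K" and "\<forall>i<3. \<forall>j<3. M i j \<in> K" and "pt_over K p"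
  shows "pt_over K (lin M p)"
  using assms(2,3) by (cases p) (simp add: pt_over_def lin_def subfield_closed[OF assms(1)])

lemma pt_over_cross:
  assumes "is_subfield K" and "pt_over K p" and "pt_over K r"
  shows "pt_over K (cross p r)"
  using assms(2,3) by (cases p, cases r) (simp add: pt_over_def cross_def subfield_closed[OF assms(1)])

lemma line_over_line_set: "pt_over K v \<Longrightarrow> v \<noteq> (0,0,0) \<Longrightarrow> line_over K (line_set v)"
  by (cases v) (auto simp: pt_over_def line_over_def)

lemma dot_cross_eq_0_on_line:
  fixes v :: "'a::idom pt"
  assumes "v \<noteq> (0,0,0)" and "P \<in> line_set v" and "R \<in> line_set v" and "U \<in> line_set v"
  shows "dot (cross P R) U = 0"
proof -
  obtain v1 v2 v3 where v: "v = (v1,v2,v3)" by (cases v)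
  have "dot v P = 0" "dot v R = 0" "dot v U = 0"
    using assms(2-4) by (simp_all add: line_set_dot)
  then have "pt_scale (dot (cross P R) U) v = (0,0,0)"
    by (induction P rule: prod_induct3, induction R rule: prod_induct3, induction U rule: prod_induct3)
      (simp only: pt_defs v prod.inject, algebra)
  then show ?thesis
    using assms(1) by (simp add: pt_scale_eq_0_iff)
qed

lemma pt_nonzero_dot_basis:
  assumes "n \<noteq> (0,0,0)"
  shows "\<exists>w\<in>{(1,0,0),(0,1,0),(0,0,1)}. dot w n \<noteq> (0::'a::comm_ring_1)"
  using assms by (cases n) (auto simp: dot_def)

lemma span_of_cross_nonzero:
  fixes P R U :: "'a::field pt"
  assumes "cross P R \<noteq> (0,0,0)" and "dot (cross P R) U = 0"
  shows "\<exists>a b. U = pt_add (pt_scale a P) (pt_scale b R)"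
proof -
  obtain w where w: "dot w (cross P R) \<noteq> 0"
    using pt_nonzero_dot_basis[OF assms(1)] by blast
  define n where "n = dot w (cross P R)"
  \<comment> \<open>Cramer's rule for U in the basis P, R, paired with w\<close>
  have "pt_scale n U = pt_add (pt_scale (dot w (cross U R)) P) (pt_scale (dot w (cross P U)) R)"
    using assms(2) unfolding n_def
    by (induction P rule: prod_induct3, induction R rule: prod_induct3, induction U rule: prod_induct3,
        induction w rule: prod_induct3) (simp only: pt_defs prod.inject, algebra)
  then have "U = pt_add (pt_scale (dot w (cross U R) / n) P) (pt_scale (dot w (cross P U) / n) R)"
    using w unfolding n_def[symmetric]
    by (cases U, cases P, cases R) (auto simp: pt_add_def pt_scale_def field_simps)
  then show ?thesis by blast
qed

lemma line_set_eq_if_cross_eq_0: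
  fixes w1 w2 :: "'a::field pt"
  assumes w1: "w1 \<noteq> (0,0,0)" and w2: "w2 \<noteq> (0,0,0)" and cross: "cross w1 w2 = (0,0,0)"
  shows "line_set w1 = line_set w2"
proof -
  obtain b where b: "dot b w1 \<noteq> 0"
    using pt_nonzero_dot_basis[OF w1] by (metis dot_def)
  \<comment> \<open>b \<times> (w1 \<times> w2) = (b \<cdot> w2) w1 - (b \<cdot> w1) w2\<close>
  have scaled: "pt_scale (dot b w1) w2 = pt_scale (dot b w2) w1"
  proof -
    obtain x1 y1 z1 x2 y2 z2 b1 b2 b3 where w: "w1 = (x1,y1,z1)" "w2 = (x2,y2,z2)" "b = (b1,b2,b3)"
      by (cases w1, cases w2, cases b)
    have "y1*z2 - z1*y2 = 0" "z1*x2 - x1*z2 = 0" "x1*y2 - y1*x2 = 0"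
      using cross unfolding w cross_def by simp_all
    then show ?thesis
      unfolding w by (simp only: pt_defs prod.inject, algebra)
  qed
  then have "dot b w2 \<noteq> 0"
    using b w2 pt_scale_eq_0_iff[of 0 w1] pt_scale_eq_0_iff[of "dot b w1" w2] by auto
  then show ?thesis
    using b scaled line_set_scale by metis
qed

lemma line_independent_points:
  fixes u :: "'a::field pt"
  obtains P R where "dot u P = 0" and "dot u R = 0"
    and "\<And>s t. pt_add (pt_scale s P) (pt_scale t R) = (0,0,0) \<Longrightarrow> s = 0 \<and> t = 0"
proof -
  obtain a b d where u: "u = (a,b,d)" by (cases u)
  consider "d \<noteq> 0" | "d = 0" "b \<noteq> 0" | "d = 0" "b = 0" by blast
  then show thesis
  proof cases
    case 1
    then show thesis
      by (intro that[of "(d,0,-a)" "(0,d,-b)"]) (auto simp: u dot_def pt_add_def pt_scale_def)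
  next
    case 2
    then show thesis
      by (intro that[of "(b,-a,0)" "(0,0,1)"]) (auto simp: u dot_def pt_add_def pt_scale_def)
  next
    case 3
    then show thesis
      by (intro that[of "(0,1,0)" "(0,0,1)"]) (auto simp: u dot_def pt_add_def pt_scale_def)
  qed
qed

definition coord :: "'a pt \<Rightarrow> nat \<Rightarrow> 'a" where
  "coord p i = (case p of (x,y,z) \<Rightarrow> if i = 0 then x else if i = 1 then y else z)"

text \<open>Carries the coordinate lines x = 0, y = 0, z = 0 into the lines w1, w2, w3.\<close>
definition frame :: "'a::comm_ring_1 pt \<Rightarrow> 'a pt \<Rightarrow> 'a pt \<Rightarrow> nat \<Rightarrow> nat \<Rightarrow> 'a" where
  "frame w1 w2 w3 i j =
     coord (if j = 0 then cross w2 w3 else if j = 1 then cross w3 w1 else cross w1 w2) i"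

definition triple :: "'a::comm_ring_1 pt \<Rightarrow> 'a pt \<Rightarrow> 'a pt \<Rightarrow> 'a" where
  "triple w1 w2 w3 = dot w1 (cross w2 w3)"

lemmas frame_defs = frame_def coord_def cross_def lin_def dot_def det3_def triple_def prod.case

lemma frame_dot_1: "dot w1 (lin (frame w1 w2 w3) (x,y,z)) = triple w1 w2 w3 * (x::'a::idom)"
  by (induction w1 rule: prod_induct3, induction w2 rule: prod_induct3, induction w3 rule: prod_induct3)
    (simp add: frame_defs; algebra)

lemma frame_dot_2: "dot w2 (lin (frame w1 w2 w3) (x,y,z)) = triple w1 w2 w3 * (y::'a::idom)"
  by (induction w1 rule: prod_induct3, induction w2 rule: prod_induct3, induction w3 rule: prod_induct3)
    (simp add: frame_defs; algebra)

lemma frame_dot_3: "dot w3 (lin (frame w1 w2 w3) (x,y,z)) = triple w1 w2 w3 * (z::'a::idom)"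
  by (induction w1 rule: prod_induct3, induction w2 rule: prod_induct3, induction w3 rule: prod_induct3)
    (simp add: frame_defs; algebra)

lemma det3_frame:
  fixes w1 :: "'a::idom pt"
  shows "det3 (frame w1 w2 w3) = (triple w1 w2 w3)^2"
  by (induction w1 rule: prod_induct3, induction w2 rule: prod_induct3, induction w3 rule: prod_induct3)
    (simp add: frame_defs; algebra)

lemma triple_rotate:
  fixes w1 :: "'a::idom pt"
  shows "triple w1 w2 w3 = dot w3 (cross w1 w2)"
  by (induction w1 rule: prod_induct3, induction w2 rule: prod_induct3, induction w3 rule: prod_induct3)
    (simp add: frame_defs; algebra)

lemma lin_frame_e3: "lin (frame w1 w2 w3) (0,0,1) = cross w1 w2"
  by (cases "cross w1 w2") (simp add: frame_def coord_def lin_def)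

lemma frame_over:
  assumes "is_subfield K" and "pt_over K w1" and "pt_over K w2" and "pt_over K w3"
  shows "frame w1 w2 w3 i j \<in> K"
  using assms(2-4)
  by (cases w1, cases w2, cases w3)
    (auto simp: frame_def coord_def cross_def pt_over_def intro!: subfield_closed[OF assms(1)])

section \<open>The polar form\<close>

definition polar :: "(nat \<Rightarrow> nat \<Rightarrow> 'a::comm_ring_1) \<Rightarrow> 'a pt \<Rightarrow> 'a pt \<Rightarrow> 'a" where
  "polar c p r = (case r of (u,v,w) \<Rightarrow> u * qdx c p + v * qdy c p + w * qdz c p)"

definition mixed_polar :: "(nat \<Rightarrow> nat \<Rightarrow> 'a::comm_ring_1) \<Rightarrow> 'a pt \<Rightarrow> 'a pt \<Rightarrow> 'a" where
  "mixed_polar c p r = qeval c (pt_add p r) - qeval c p - polar c p r - polar c r p - qeval c r"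

lemma qeval_taylor:
  fixes c :: "nat \<Rightarrow> nat \<Rightarrow> 'a::idom"
  shows "qeval c (pt_add p (pt_scale t r)) = qeval c p + t * polar c p r + t^2 * mixed_polar c p r
           + t^3 * polar c r p + t^4 * qeval c r"
  by (induction p rule: prod_induct3, induction r rule: prod_induct3)
    (simp only: mixed_polar_def polar_def pt_add_def pt_scale_def prod.case
      qeval_expand qdx_expand qdy_expand qdz_expand, algebra)

lemma polar_basis:
  "polar c p (1,0,0) = qdx c p" "polar c p (0,1,0) = qdy c p" "polar c p (0,0,1) = qdz c p"
  by (simp_all add: polar_def)

lemma polar_unit_vectors:
  "polar c (0,1,0) (0,0,1) = c 0 3" "polar c (0,0,1) (0,1,0) = c 0 1"
  "polar c (1,0,0) (0,0,1) = c 3 0" "polar c (0,0,1) (1,0,0) = c 1 0"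
  "polar c (1,0,0) (0,1,0) = c 3 1" "polar c (0,1,0) (1,0,0) = c 1 3"
  by (simp_all add: polar_def qdx_expand qdy_expand qdz_expand)

text \<open>In characteristic 2 the polar form can be recovered from values of the quartic, by
  sampling along the line at the cube roots of unity 1, \<omega>, \<omega>^2. This is what makes it
  compatible with linear substitutions and forces it to vanish along bitangents.\<close>
locale char2_cube_root =
  fixes \<omega> :: "'a::field"
  assumes two_eq_zero: "(2::'a) = 0"
    and cube_root: "\<omega>^2 + \<omega> + 1 = 0"
begin

lemma quartic_linear_coeff:
  assumes "\<And>t. f t = P + t * D + t^2 * E + t^3 * D' + t^4 * R"
  shows "f 1 + \<omega>^2 * f \<omega> + \<omega> * f (\<omega>^2) + R = D"
proof -
  have "f 1 + \<omega>^2 * f \<omega> + \<omega> * f (\<omega>^2) + R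
      = (P + D + E + D' + R) + \<omega>^2 * (P + \<omega> * D + \<omega>^2 * E + \<omega>^3 * D' + \<omega>^4 * R)
        + \<omega> * (P + \<omega>^2 * D + \<omega>^4 * E + \<omega>^6 * D' + \<omega>^8 * R) + R"
    by (simp add: assms flip: power_mult)
  also have "\<dots> = D + 2 * (D + 2 * R)"
    using cube_root by algebra
  finally show ?thesis
    using two_eq_zero by simp
qed

lemma polar_eq_values:
  "polar c p r = qeval c (pt_add p r) + \<omega>^2 * qeval c (pt_add p (pt_scale \<omega> r))
     + \<omega> * qeval c (pt_add p (pt_scale (\<omega>^2) r)) + qeval c r"
  using quartic_linear_coeff[of "\<lambda>t. qeval c (pt_add p (pt_scale t r))", OF qeval_taylor]
  by (simp add: pt_scale_one)

lemma polar_lin_subst: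
  fixes c c' :: "nat \<Rightarrow> nat \<Rightarrow> 'a"
  assumes "\<And>q. qeval c' q = qeval c (lin M q)"
  shows "polar c' p r = polar c (lin M p) (lin M r)"
  by (simp only: polar_eq_values assms lin_add lin_scale)

lemma polar_eq_0_if_square:
  fixes c :: "nat \<Rightarrow> nat \<Rightarrow> 'a"
  assumes "\<And>s t. qeval c (pt_add (pt_scale s U) (pt_scale t V)) = (g0*s^2 + g1*s*t + g2*t^2)^2"
  shows "polar c U V = 0"
proof -
  have "qeval c (pt_add U (pt_scale t V))
      = g0^2 + t * (2*g0*g1) + t^2 * (g1^2 + 2*g0*g2) + t^3 * (2*g1*g2) + t^4 * g2^2" for t
  proof -
    have "qeval c (pt_add U (pt_scale t V)) = (g0 + g1*t + g2*t^2)^2"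
      using assms[of 1 t] by (simp add: pt_scale_one)
    then show ?thesis by algebra
  qed
  from quartic_linear_coeff[OF this] have "2*g0*g1 = polar c U V"
    using assms[of 0 1] unfolding polar_eq_values by (cases V) (simp add: pt_add_def pt_scale_def pt_scale_one)
  then show ?thesis
    using two_eq_zero by simp
qed

lemma nonsingular_lin_subst:
  fixes c c' :: "nat \<Rightarrow> nat \<Rightarrow> 'a"
  assumes subst: "\<And>q. qeval c' q = qeval c (lin M q)"
    and det: "det3 M \<noteq> 0" and ns: "nonsingular_quartic c"
  shows "nonsingular_quartic c'"
  unfolding nonsingular_quartic_def
proof (intro allI impI notI)
  fix p :: "'a pt"
  assume p0: "p \<noteq> (0,0,0)" and sing: "qeval c' p = 0 \<and> qdx c' p = 0 \<and> qdy c' p = 0 \<and> qdz c' p = 0"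
  have polar_0: "polar c (lin M p) q = 0" for q
  proof -
    define r where "r = pt_scale (1 / det3 M) (lin (adjugate3 M) q)"
    have "polar c (lin M p) q = polar c' p r"
      unfolding polar_lin_subst[OF subst] r_def lin_surj[OF det] ..
    also have "\<dots> = 0"
      using sing by (cases r) (simp add: polar_def)
    finally show ?thesis .
  qed
  have "lin M p \<noteq> (0,0,0)"
    using p0 lin_eq_0_iff[OF det] by blast
  moreover have "qeval c (lin M p) = 0"
    using sing subst by simp
  ultimately show False
    using ns polar_0[of "(1,0,0)"] polar_0[of "(0,1,0)"] polar_0[of "(0,0,1)"]
    unfolding nonsingular_quartic_def polar_basis by blast
qed

end

lemma ordinary_quartic_card_le:
  assumes "ordinary_quartic c" and "bitangents c \<subseteq> f ` S" and "finite S"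
  shows "7 \<le> card S"
proof -
  have "card (bitangents c) \<le> card (f ` S)"
    using assms(2,3) by (intro card_mono) auto
  also have "\<dots> \<le> card S"
    using assms(3) by (rule card_image_le)
  finally show ?thesis
    using assms(1) unfolding ordinary_quartic_def by simp
qed

lemma ordinary_quartic_card_le_lines:
  assumes "ordinary_quartic c" and "finite S"
    and "\<And>L. L \<in> bitangents c \<Longrightarrow> \<exists>k w. k \<noteq> 0 \<and> w \<in> S \<and> L = lin M ` line_set (pt_scale k w)"
  shows "7 \<le> card (S :: 'a::idom pt set)"
proof (rule ordinary_quartic_card_le[OF assms(1) _ assms(2)])
  show "bitangents c \<subseteq> (\<lambda>w. lin M ` line_set w) ` S"
  proof
    fix L assume "L \<in> bitangents c"
    then obtain k w where "k \<noteq> 0" "w \<in> S" "L = lin M ` line_set (pt_scale k w)"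
      using assms(3) by blast
    then show "L \<in> (\<lambda>w. lin M ` line_set w) ` S"
      by (simp add: lin_image_line_set_scale)
  qed
qed

lemma bitangent_lin_image:
  fixes c :: "nat \<Rightarrow> nat \<Rightarrow> 'a::field"
  assumes iso: "\<And>p. qeval c (lin M p) = \<sigma>^2 * G p"
    and sq: "\<And>s t. G (pt_add (pt_scale s P) (pt_scale t R)) = (g0*s^2 + g1*s*t + g2*t^2)^2"
    and g: "(g0,g1,g2) \<noteq> (0,0,0)" and \<sigma>: "\<sigma> \<noteq> 0" and det: "det3 M \<noteq> 0"
    and PR: "cross P R \<noteq> (0,0,0)"
  shows "is_bitangent c (cross (lin M P) (lin M R))"
proof -
  have "cross (lin M P) (lin M R) \<noteq> (0,0,0)"
    using cross_lin_nonzero[OF det PR] .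
  moreover have "lin M P \<in> line_set (cross (lin M P) (lin M R))"
    and "lin M R \<in> line_set (cross (lin M P) (lin M R))"
    by (simp_all add: line_set_dot dot_cross_left dot_cross_right)
  moreover have "(\<sigma>*g0, \<sigma>*g1, \<sigma>*g2) \<noteq> (0,0,0)"
    using g \<sigma> by auto
  moreover have "qeval c (pt_add (pt_scale s (lin M P)) (pt_scale t (lin M R)))
      = ((\<sigma>*g0) * s^2 + (\<sigma>*g1) * s * t + (\<sigma>*g2) * t^2)^2" for s t
  proof -
    have "qeval c (pt_add (pt_scale s (lin M P)) (pt_scale t (lin M R)))
        = \<sigma>^2 * (g0*s^2 + g1*s*t + g2*t^2)^2"
      by (simp only: iso sq lin_add[symmetric] lin_scale[symmetric])
    then show ?thesis
      by algebra
  qed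
  ultimately show ?thesis
    unfolding is_bitangent_def by blast
qed

context char2_cube_root
begin

lemma bitangent_polar_eq_0:
  fixes c :: "nat \<Rightarrow> nat \<Rightarrow> 'a"
  assumes "is_bitangent c v" and "U \<in> line_set v" and "V \<in> line_set v"
  shows "polar c U V = 0"
proof -
  obtain P R g0 g1 g2 where v0: "v \<noteq> (0,0,0)" and PR: "P \<in> line_set v" "R \<in> line_set v"
    and cross_PR: "cross P R \<noteq> (0,0,0)"
    and sq: "\<And>s t. qeval c (pt_add (pt_scale s P) (pt_scale t R)) = (g0 * s^2 + g1 * s * t + g2 * t^2)^2"
    using assms(1) unfolding is_bitangent_def by blast
  obtain a b where U: "U = pt_add (pt_scale a P) (pt_scale b R)"
    using span_of_cross_nonzero[OF cross_PR dot_cross_eq_0_on_line[OF v0 PR assms(2)]] by blast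
  obtain a' b' where V: "V = pt_add (pt_scale a' P) (pt_scale b' R)"
    using span_of_cross_nonzero[OF cross_PR dot_cross_eq_0_on_line[OF v0 PR assms(3)]] by blast
  show ?thesis
  proof (rule polar_eq_0_if_square)
    fix s t
    have "pt_add (pt_scale s U) (pt_scale t V)
        = pt_add (pt_scale (s*a + t*a') P) (pt_scale (s*b + t*b') R)"
      unfolding U V by (cases P, cases R) (simp add: pt_add_def pt_scale_def algebra_simps)
    then have "qeval c (pt_add (pt_scale s U) (pt_scale t V))
        = (g0 * (s*a + t*a')^2 + g1 * (s*a + t*a') * (s*b + t*b') + g2 * (s*b + t*b')^2)^2"
      by (simp only: sq)
    also have "\<dots> = ((g0*a^2 + g1*a*b + g2*b^2) * s^2
        + (2*g0*a*a' + g1*(a*b' + a'*b) + 2*g2*b*b') * s * t + (g0*a'^2 + g1*a'*b' + g2*b'^2) * t^2)^2"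
      by algebra
    finally show "qeval c (pt_add (pt_scale s U) (pt_scale t V)) = \<dots>" .
  qed
qed

lemma bitangents_polar_eq_0:
  fixes c :: "nat \<Rightarrow> nat \<Rightarrow> 'a"
  assumes "L \<in> bitangents c" and "U \<in> L" and "V \<in> L"
  shows "polar c U V = 0"
  using assms bitangent_polar_eq_0 unfolding bitangents_def by blast

lemma bitangent_in_coordinates:
  fixes c c' :: "nat \<Rightarrow> nat \<Rightarrow> 'a"
  assumes L: "L \<in> bitangents c" and det: "det3 M \<noteq> 0"
    and subst: "\<And>q. qeval c' q = qeval c (lin M q)"
  obtains u where "u \<noteq> (0,0,0)" and "L = lin M ` line_set u"
    and "\<And>p. lin M p \<in> L \<longleftrightarrow> dot u p = 0"
    and "\<And>U V. dot u U = 0 \<Longrightarrow> dot u V = 0 \<Longrightarrow> polar c' U V = 0"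
proof -
  obtain v where Lv: "L = line_set v" and v0: "v \<noteq> (0,0,0)"
    using L unfolding bitangents_def is_bitangent_def by blast
  define u where "u = lin (transpose3 M) v"
  have mem: "lin M p \<in> L \<longleftrightarrow> dot u p = 0" for p
    unfolding Lv u_def line_set_dot by (simp add: dot_lin)
  have "u \<noteq> (0,0,0)"
    using v0 lin_eq_0_iff[of "transpose3 M" v] det unfolding u_def det3_transpose3 by blast
  moreover have "L = lin M ` line_set u"
  proof
    show "L \<subseteq> lin M ` line_set u"
    proof
      fix q assume "q \<in> L"
      moreover have "q = lin M (pt_scale (1 / det3 M) (lin (adjugate3 M) q))"
        using lin_surj[OF det] by simp
      ultimately show "q \<in> lin M ` line_set u"
        using mem unfolding line_set_dot by (metis (mono_tags) image_eqI mem_Collect_eq)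
    qed
  qed (use mem in \<open>auto simp: line_set_dot\<close>)
  moreover have "polar c' U V = 0" if "dot u U = 0" "dot u V = 0" for U V
    unfolding polar_lin_subst[OF subst]
    using bitangents_polar_eq_0[OF L] mem that by blast
  ultimately show ?thesis
    using that mem by blast
qed

lemma bitangent_polar_qsubst_eq_0:
  fixes c :: "nat \<Rightarrow> nat \<Rightarrow> 'a"
  assumes "line_set w \<in> bitangents c" and "dot w (lin M U) = 0" and "dot w (lin M V) = 0"
  shows "polar (qsubst c M) U V = 0"
  unfolding polar_lin_subst[OF qeval_qsubst]
  using bitangents_polar_eq_0[OF assms(1)] assms(2,3) by (simp add: line_set_dot)

lemma qsubst_frame_coeffs_1:
  fixes c :: "nat \<Rightarrow> nat \<Rightarrow> 'a"
  assumes "line_set w1 \<in> bitangents c"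
  shows "qsubst c (frame w1 w2 w3) 0 3 = 0" "qsubst c (frame w1 w2 w3) 0 1 = 0"
  using bitangent_polar_qsubst_eq_0[OF assms, of "frame w1 w2 w3" "(0,1,0)" "(0,0,1)"]
    bitangent_polar_qsubst_eq_0[OF assms, of "frame w1 w2 w3" "(0,0,1)" "(0,1,0)"]
  by (simp_all add: frame_dot_1 polar_unit_vectors)

lemma qsubst_frame_coeffs_2:
  fixes c :: "nat \<Rightarrow> nat \<Rightarrow> 'a"
  assumes "line_set w2 \<in> bitangents c"
  shows "qsubst c (frame w1 w2 w3) 3 0 = 0" "qsubst c (frame w1 w2 w3) 1 0 = 0"
  using bitangent_polar_qsubst_eq_0[OF assms, of "frame w1 w2 w3" "(1,0,0)" "(0,0,1)"]
    bitangent_polar_qsubst_eq_0[OF assms, of "frame w1 w2 w3" "(0,0,1)" "(1,0,0)"]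
  by (simp_all add: frame_dot_2 polar_unit_vectors)

lemma qsubst_frame_coeffs_3:
  fixes c :: "nat \<Rightarrow> nat \<Rightarrow> 'a"
  assumes "line_set w3 \<in> bitangents c"
  shows "qsubst c (frame w1 w2 w3) 3 1 = 0" "qsubst c (frame w1 w2 w3) 1 3 = 0"
  using bitangent_polar_qsubst_eq_0[OF assms, of "frame w1 w2 w3" "(1,0,0)" "(0,1,0)"]
    bitangent_polar_qsubst_eq_0[OF assms, of "frame w1 w2 w3" "(0,1,0)" "(1,0,0)"]
  by (simp_all add: frame_dot_3 polar_unit_vectors)

end

section \<open>The bitangents of C_Q\<close>

text \<open>The seven bitangents of C_Q are the lines of the Fano plane P^2(F_2); each entry lists two
  points P, R spanning one of them and the quadratic form g0 s^2 + g1 s t + g2 t^2 whose square is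
  the restriction of C_Q to the line.\<close>
definition CQ_bitangent_data :: "'a::comm_ring_1 \<Rightarrow> 'a \<Rightarrow> 'a \<Rightarrow> 'a \<Rightarrow> 'a \<Rightarrow> 'a \<Rightarrow> ('a pt \<times> 'a pt \<times> 'a pt) list" where
  "CQ_bitangent_data a b cc d e f =
     [((0,1,0), (0,0,1), (b, e, cc)),
      ((1,0,0), (0,0,1), (a, f, cc)),
      ((1,0,0), (0,1,0), (a, d, b)),
      ((1,1,0), (0,1,1), (a+b+d, d+e+f, b+cc+e)),
      ((1,1,0), (0,0,1), (a+b+d, e+f+1, cc)),
      ((1,0,0), (0,1,1), (a, d+f+1, b+cc+e)),
      ((1,0,1), (0,1,0), (a+cc+f, d+e+1, b))]"

lemma CQ_bitangent_data_square:
  fixes a :: "'a::field"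
  assumes "(2::'a) = 0" and "(P, R, (g0,g1,g2)) \<in> set (CQ_bitangent_data a b cc d e f)"
  shows "CQ a b cc d e f (pt_add (pt_scale s P) (pt_scale t R)) = (g0*s^2 + g1*s*t + g2*t^2)^2"
  using assms(2) unfolding CQ_bitangent_data_def
  by (auto simp: CQ_def pt_add_def pt_scale_def power2_eq_square power4_eq_xxxx algebra_simps
      char2_simps[OF assms(1)])

lemma CQ_bitangent_data_nonzero:
  "in_QQ a b cc d e f \<Longrightarrow> (P, R, g) \<in> set (CQ_bitangent_data a b cc d e f) \<Longrightarrow> g \<noteq> (0,0,0)"
  by (auto simp: CQ_bitangent_data_def in_QQ_def)

lemma CQ_bitangent_data_cross:
  "(P, R, g) \<in> set (CQ_bitangent_data a b cc d e f) \<Longrightarrow> cross P R \<noteq> ((0,0,0)::'a::field pt)"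
  by (auto simp: CQ_bitangent_data_def cross_def)

lemma CQ_bitangent_data_over:
  assumes "is_subfield K" and "(P, R, g) \<in> set (CQ_bitangent_data a b cc d e f)"
  shows "pt_over K P" and "pt_over K R"
  using assms(2) subfield_zero[OF assms(1)] subfield_one[OF assms(1)]
  by (auto simp: CQ_bitangent_data_def pt_over_def)

lemma card_CQ_bitangent_lines:
  fixes M :: "nat \<Rightarrow> nat \<Rightarrow> 'a::field"
  assumes "det3 M \<noteq> 0"
  shows "card ((\<lambda>(P, R, g). line_set (cross (lin M P) (lin M R))) ` set (CQ_bitangent_data a b cc d e f)) = 7"
    (is "card (?line ` ?S) = 7")
proof -
  define pattern where "pattern = (\<lambda>L. (lin M (1,0,0) \<in> L, lin M (0,1,0) \<in> L, lin M (0,0,1) \<in> L))"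
  have "pattern (?line x) = (case x of (P, R, g) \<Rightarrow>
      (dot (cross P R) (1,0,0) = 0, dot (cross P R) (0,1,0) = 0, dot (cross P R) (0,0,1) = 0))" for x
    using assms by (cases x) (simp add: pattern_def line_set_dot dot_cross_lin)
  then have "pattern ` ?line ` ?S = (\<lambda>(P, R, g). (dot (cross P R) (1,0,0) = 0,
      dot (cross P R) (0,1,0) = 0, dot (cross P R) (0,0,1) = 0)) ` ?S"
    by (simp add: image_image)
  then have "card (pattern ` ?line ` ?S) = 7"
    by (simp add: CQ_bitangent_data_def cross_def dot_def)
  then show ?thesis
    using card_image_le[of "?line ` ?S" pattern] card_image_le[of ?S ?line]
    by (simp add: CQ_bitangent_data_def)
qed

lemma bitangents_eq_CQ_bitangent_lines:
  fixes c :: "nat \<Rightarrow> nat \<Rightarrow> 'a::field"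
  assumes two: "(2::'a) = 0" and QQ: "in_QQ a b cc d e f" and ord: "ordinary_quartic c"
    and iso: "\<And>p. qeval c (lin M p) = \<sigma>^2 * CQ a b cc d e f p" and \<sigma>: "\<sigma> \<noteq> 0"
    and det: "det3 M \<noteq> 0"
  shows "bitangents c = (\<lambda>(P, R, g). line_set (cross (lin M P) (lin M R)))
    ` set (CQ_bitangent_data a b cc d e f)" (is "_ = ?line ` ?S")
proof -
  have "?line x \<in> bitangents c" if "x \<in> ?S" for x
  proof -
    obtain P R g where x: "x = (P, R, g)" by (cases x)
    obtain g0 g1 g2 where g: "g = (g0, g1, g2)" by (cases g)
    have "is_bitangent c (cross (lin M P) (lin M R))"
      using that unfolding x g
      by (intro bitangent_lin_image[OF iso CQ_bitangent_data_square[OF two] _ \<sigma> det]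
          CQ_bitangent_data_nonzero[OF QQ] CQ_bitangent_data_cross)
    then show ?thesis
      unfolding x bitangents_def prod.case by blast
  qed
  then have "?line ` ?S \<subseteq> bitangents c"
    by blast
  moreover have "finite (bitangents c)" and "card (?line ` ?S) = card (bitangents c)"
    using card_CQ_bitangent_lines[OF det] ord unfolding ordinary_quartic_def by simp_all
  ultimately show ?thesis
    using card_subset_eq by metis
qed

lemma bitangents_over_if_K_iso_CQ:
  fixes K :: "'a::field set" and c :: "nat \<Rightarrow> nat \<Rightarrow> 'a"
  assumes two: "(2::'a) = 0" and sf: "is_subfield K" and fin: "finite K"
    and ord: "ordinary_quartic c" and QQ: "in_QQ a b cc d e f" and iso: "K_iso K c (CQ a b cc d e f)"
  shows "\<forall>L\<in>bitangents c. line_over K L"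
proof -
  obtain M lam where MK: "\<forall>i<3. \<forall>j<3. M i j \<in> K" and det: "det3 M \<noteq> 0" and lamK: "lam \<in> K"
    and lam0: "lam \<noteq> 0" and iso_M: "\<And>p. qeval c (lin M p) = lam * CQ a b cc d e f p"
    using iso unfolding K_iso_def by blast
  obtain \<sigma> where "\<sigma>^2 = lam"
    using finite_char2_subfield_sqrt[OF sf fin two lamK] by blast
  with iso_M lam0 have iso_\<sigma>: "\<And>p. qeval c (lin M p) = \<sigma>^2 * CQ a b cc d e f p" and \<sigma>0: "\<sigma> \<noteq> 0"
    by auto
  have "line_over K (line_set (cross (lin M P) (lin M R)))"
    if "(P, R, g) \<in> set (CQ_bitangent_data a b cc d e f)" for P R g
    using that cross_lin_nonzero[OF det CQ_bitangent_data_cross[OF that]]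
    by (intro line_over_line_set pt_over_cross pt_over_lin sf MK CQ_bitangent_data_over[OF sf])
  then show ?thesis
    unfolding bitangents_eq_CQ_bitangent_lines[OF two QQ ord iso_\<sigma> \<sigma>0 det] by auto
qed

section \<open>Normal form of a quartic with coordinate bitangents\<close>

definition conic_of_roots :: "(nat \<Rightarrow> nat \<Rightarrow> 'a::comm_ring_1) \<Rightarrow> 'a pt \<Rightarrow> 'a" where
  "conic_of_roots r p = (case p of (x,y,z) \<Rightarrow>
     r 4 0 * x^2 + r 0 4 * y^2 + r 0 0 * z^2 + r 2 2 * x * y + r 0 2 * y * z + r 2 0 * z * x)"

lemma line_meets_conic:
  fixes r :: "nat \<Rightarrow> nat \<Rightarrow> 'a::field"
  assumes "alg_closed TYPE('a)"
  obtains p where "p \<noteq> (0,0,0)" and "dot u p = 0" and "conic_of_roots r p = 0"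
proof -
  obtain P R where PR: "dot u P = 0" "dot u R = 0"
    and indep: "\<And>s t. pt_add (pt_scale s P) (pt_scale t R) = (0,0,0) \<Longrightarrow> s = 0 \<and> t = 0"
    using line_independent_points by blast
  let ?S = "conic_of_roots r"
  have restrict: "?S (pt_add (pt_scale s P) (pt_scale t R))
      = ?S P * s^2 + (?S (pt_add P R) - ?S P - ?S R) * s * t + ?S R * t^2" for s t
    by (induction P rule: prod_induct3, induction R rule: prod_induct3)
      (simp only: conic_of_roots_def pt_add_def pt_scale_def prod.case, algebra)
  obtain s t where "(s,t) \<noteq> (0,0)"
    and "?S P * s^2 + (?S (pt_add P R) - ?S P - ?S R) * s * t + ?S R * t^2 = 0"
    using binary_quadratic_has_zero[OF assms] by blast
  note st = this
  show thesis
  proof (rule that)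
    show "pt_add (pt_scale s P) (pt_scale t R) \<noteq> (0,0,0)"
      using indep st(1) by blast
    have "dot u (pt_add (pt_scale s P) (pt_scale t R)) = s * dot u P + t * dot u R"
      by (induction u rule: prod_induct3, induction P rule: prod_induct3, induction R rule: prod_induct3)
        (simp only: dot_def pt_add_def pt_scale_def prod.case, algebra)
    then show "dot u (pt_add (pt_scale s P) (pt_scale t R)) = 0"
      using PR by simp
    show "?S (pt_add (pt_scale s P) (pt_scale t R)) = 0"
      unfolding restrict by (rule st(2))
  qed
qed

text \<open>In characteristic 2 the monomials with even exponents form the square of a conic; the
  remaining ones are what the vanishing of coefficients along coordinate bitangents leaves over.\<close>
lemma char2_normal_form_xy:
  fixes e :: "nat \<Rightarrow> nat \<Rightarrow> 'a::field"
  assumes two: "(2::'a) = 0"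
    and zero: "e 0 3 = 0" "e 0 1 = 0" "e 3 0 = 0" "e 1 0 = 0" "e 2 1 = 0" "e 1 2 = 0"
    and sq: "\<And>i j. e i j = (r i j)^2"
  shows "qeval e (x,y,z) = (conic_of_roots r (x,y,z))^2 + x*y*(r 3 1*x + r 1 3*y + r 1 1*z)^2"
    and "qdx e (x,y,z) = y*(r 3 1*x + r 1 3*y + r 1 1*z)^2"
    and "qdy e (x,y,z) = x*(r 3 1*x + r 1 3*y + r 1 1*z)^2"
    and "qdz e (x,y,z) = 0"
  by (simp_all only: qeval_expand qdx_expand qdy_expand qdz_expand zero conic_of_roots_def prod.case
      sq[of 4 0] sq[of 0 4] sq[of 0 0] sq[of 2 2] sq[of 0 2] sq[of 2 0] sq[of 3 1] sq[of 1 3] sq[of 1 1])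
    (use two in \<open>simp_all add: char2_simps power2_eq_square power3_eq_cube power4_eq_xxxx algebra_simps\<close>)

lemma char2_normal_form_xyz_grad:
  fixes e :: "nat \<Rightarrow> nat \<Rightarrow> 'a::field"
  assumes two: "(2::'a) = 0"
    and zero: "e 0 3 = 0" "e 0 1 = 0" "e 3 0 = 0" "e 1 0 = 0" "e 3 1 = 0" "e 1 3 = 0"
  shows "qdx e (x,y,z) = e 1 2*y^2*z + e 1 1*y*z^2"
    and "qdy e (x,y,z) = e 2 1*x^2*z + e 1 1*x*z^2"
    and "qdz e (x,y,z) = e 2 1*x^2*y + e 1 2*x*y^2"
  by (simp_all only: qdx_expand qdy_expand qdz_expand zero)
    (use two in \<open>simp_all add: char2_simps\<close>)

lemma char2_normal_form_xyz:
  fixes e :: "nat \<Rightarrow> nat \<Rightarrow> 'a::field"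
  assumes two: "(2::'a) = 0"
    and zero: "e 0 3 = 0" "e 0 1 = 0" "e 3 0 = 0" "e 1 0 = 0" "e 3 1 = 0" "e 1 3 = 0"
    and sq: "\<And>i j. e i j = (r i j)^2"
  shows "qeval e (x,y,z) = (conic_of_roots r (x,y,z))^2 + x*y*z*(e 2 1*x + e 1 2*y + e 1 1*z)"
  by (simp only: qeval_expand zero conic_of_roots_def prod.case
      sq[of 4 0] sq[of 0 4] sq[of 0 0] sq[of 2 2] sq[of 0 2] sq[of 2 0])
    (use two in \<open>simp add: char2_simps power2_eq_square power4_eq_xxxx algebra_simps\<close>)

lemma normal_form_xy_singular:
  fixes e :: "nat \<Rightarrow> nat \<Rightarrow> 'a::field"
  assumes "(2::'a) = 0" and "alg_closed TYPE('a)"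
    and "e 0 3 = 0" "e 0 1 = 0" "e 3 0 = 0" "e 1 0 = 0" "e 2 1 = 0" "e 1 2 = 0"
  shows "\<not> nonsingular_quartic e"
proof -
  obtain r where sq: "\<And>i j. e i j = (r i j)^2"
    using alg_closed_coeff_roots[OF assms(2)] by blast
  obtain p where "p \<noteq> (0,0,0)" "dot (r 3 1, r 1 3, r 1 1) p = 0" "conic_of_roots r p = 0"
    using line_meets_conic[OF assms(2)] by blast
  then show ?thesis
    unfolding nonsingular_quartic_def
    by (cases p) (auto simp: char2_normal_form_xy[OF assms(1,3-8) sq] dot_def)
qed

lemma normal_form_xyz_singular:
  fixes e :: "nat \<Rightarrow> nat \<Rightarrow> 'a::field"
  assumes "(2::'a) = 0" and "alg_closed TYPE('a)"
    and "e 0 3 = 0" "e 0 1 = 0" "e 3 0 = 0" "e 1 0 = 0" "e 3 1 = 0" "e 1 3 = 0"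
    and "(e 2 1 = 0 \<and> e 1 2 = 0) \<or> (e 2 1 = 0 \<and> e 1 1 = 0) \<or> (e 1 2 = 0 \<and> e 1 1 = 0)"
  shows "\<not> nonsingular_quartic e"
proof -
  obtain r where sq: "\<And>i j. e i j = (r i j)^2"
    using alg_closed_coeff_roots[OF assms(2)] by blast
  note normal_form = char2_normal_form_xyz[OF assms(1,3-8) sq] char2_normal_form_xyz_grad[OF assms(1,3-8)]
  \<comment> \<open>the singular point lies on the conic and on the coordinate line of the surviving coefficient\<close>
  obtain u where u: "u \<in> {(1,0,0), (0,1,0), (0,0,1)}"
    and vanish: "\<And>x y z. dot u (x,y,z) = 0 \<Longrightarrow> qeval e (x,y,z) = (conic_of_roots r (x,y,z))^2
      \<and> qdx e (x,y,z) = 0 \<and> qdy e (x,y,z) = 0 \<and> qdz e (x,y,z) = 0"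
  proof -
    consider "e 2 1 = 0" "e 1 2 = 0" | "e 2 1 = 0" "e 1 1 = 0" | "e 1 2 = 0" "e 1 1 = 0"
      using assms(9) by blast
    then show thesis
    proof cases
      case 1
      then show thesis
        by (intro that[of "(0,0,1)"]) (auto simp: normal_form dot_def)
    next
      case 2
      then show thesis
        by (intro that[of "(0,1,0)"]) (auto simp: normal_form dot_def)
    next
      case 3
      then show thesis
        by (intro that[of "(1,0,0)"]) (auto simp: normal_form dot_def)
    qed
  qed
  obtain p where p: "p \<noteq> (0,0,0)" "dot u p = 0" "conic_of_roots r p = 0"
    using line_meets_conic[OF assms(2)] by blast
  then have "qeval e p = 0 \<and> qdx e p = 0 \<and> qdy e p = 0 \<and> qdz e p = 0"
    using vanish by (cases p) simp
  then show ?thesis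
    unfolding nonsingular_quartic_def using p(1) by blast
qed

lemma in_QQ_if_CQ_smooth:
  fixes a :: "'a::field"
  assumes two: "(2::'a) = 0"
    and smooth: "\<And>x y z. (x,y,z) \<noteq> (0,0,0) \<Longrightarrow> CQ a b cc d e f (x,y,z) = 0
      \<Longrightarrow> y^2*z + y*z^2 = 0 \<Longrightarrow> x^2*z + x*z^2 = 0 \<Longrightarrow> x^2*y + x*y^2 = 0 \<Longrightarrow> False"
  shows "in_QQ a b cc d e f"
proof -
  have "1 + 1 = (0::'a)"
    using two by simp
  then have "a \<noteq> 0" "b \<noteq> 0" "cc \<noteq> 0" "a + b + d \<noteq> 0" "b + cc + e \<noteq> 0" "a + cc + f \<noteq> 0"
      "a + b + cc + d + e + f \<noteq> 1"
    using smooth[of 1 0 0] smooth[of 0 1 0] smooth[of 0 0 1] smooth[of 1 1 0] smooth[of 0 1 1]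
      smooth[of 1 0 1] smooth[of 1 1 1]
    by (auto simp: CQ_def algebra_simps)
  then show ?thesis
    by (simp add: in_QQ_def)
qed

lemma char2_normal_form_rescaled:
  fixes e :: "nat \<Rightarrow> nat \<Rightarrow> 'a::field"
  assumes two: "(2::'a) = 0"
    and zero: "e 0 3 = 0" "e 0 1 = 0" "e 3 0 = 0" "e 1 0 = 0" "e 3 1 = 0" "e 1 3 = 0"
    and sq: "\<And>i j. e i j = (r i j)^2"
  defines "A \<equiv> e 2 1" and "B \<equiv> e 1 2" and "G \<equiv> e 1 1"
  shows "qeval e (B*G*x, A*G*y, A*B*z)
      = (conic_of_roots r (B*G*x, A*G*y, A*B*z))^2 + (A*B*G)^3 * (x*y*z*(x+y+z))"
    and "qdx e (B*G*x, A*G*y, A*B*z) = A^3*B^2*G^2 * (y^2*z + y*z^2)"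
    and "qdy e (B*G*x, A*G*y, A*B*z) = A^2*B^3*G^2 * (x^2*z + x*z^2)"
    and "qdz e (B*G*x, A*G*y, A*B*z) = A^2*B^2*G^3 * (x^2*y + x*y^2)"
  unfolding char2_normal_form_xyz[OF two zero sq] char2_normal_form_xyz_grad[OF two zero] A_def B_def G_def
  by algebra+

lemma char2_normal_form_CQ:
  fixes e :: "nat \<Rightarrow> nat \<Rightarrow> 'a::field"
  assumes two: "(2::'a) = 0"
    and zero: "e 0 3 = 0" "e 0 1 = 0" "e 3 0 = 0" "e 1 0 = 0" "e 3 1 = 0" "e 1 3 = 0"
    and sq: "\<And>i j. e i j = (r i j)^2"
    and ABG: "e 2 1 = A" "e 1 2 = B" "e 1 1 = G" and nz: "A \<noteq> 0" "B \<noteq> 0" "G \<noteq> 0"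
    and \<sigma>: "\<sigma>^2 = (A*B*G)^3" "\<sigma> \<noteq> 0"
  defines "qa \<equiv> r 4 0 * (B*G)^2 / \<sigma>" and "qb \<equiv> r 0 4 * (A*G)^2 / \<sigma>"
    and "qc \<equiv> r 0 0 * (A*B)^2 / \<sigma>" and "qd \<equiv> r 2 2 * (B*G) * (A*G) / \<sigma>"
    and "qe \<equiv> r 0 2 * (A*G) * (A*B) / \<sigma>" and "qf \<equiv> r 2 0 * (A*B) * (B*G) / \<sigma>"
  shows "qeval e (B*G*x, A*G*y, A*B*z) = (A*B*G)^3 * CQ qa qb qc qd qe qf (x,y,z)"
    and "nonsingular_quartic e \<Longrightarrow> in_QQ qa qb qc qd qe qf"
proof -
  note rescaled = char2_normal_form_rescaled[OF two zero sq, unfolded ABG]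
  have conic: "conic_of_roots r (B*G*x, A*G*y, A*B*z)
      = \<sigma> * (qa*x^2 + qb*y^2 + qc*z^2 + qd*x*y + qe*y*z + qf*z*x)" for x y z
    unfolding conic_of_roots_def qa_def qb_def qc_def qd_def qe_def qf_def
    using \<sigma>(2) by (simp add: field_simps power2_eq_square)
  show CQ_scaled: "qeval e (B*G*x, A*G*y, A*B*z) = (A*B*G)^3 * CQ qa qb qc qd qe qf (x,y,z)" for x y z
  proof -
    let ?Q = "qa*x^2 + qb*y^2 + qc*z^2 + qd*x*y + qe*y*z + qf*z*x"
    have "qeval e (B*G*x, A*G*y, A*B*z) = (\<sigma> * ?Q)^2 + (A*B*G)^3 * (x*y*z*(x+y+z))"
      unfolding rescaled conic ..
    also have "\<dots> = (A*B*G)^3 * ?Q^2 + (A*B*G)^3 * (x*y*z*(x+y+z))"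
      using \<sigma>(1) by (simp add: power_mult_distrib)
    also have "\<dots> = (A*B*G)^3 * (?Q^2 - x*y*z*(x+y+z))"
      by (simp add: char2_diff[OF two] distrib_left)
    finally show ?thesis
      by (simp add: CQ_def)
  qed
  assume ns: "nonsingular_quartic e"
  show "in_QQ qa qb qc qd qe qf"
  proof (rule in_QQ_if_CQ_smooth[OF two])
    fix x y z :: 'a
    assume "(x,y,z) \<noteq> (0,0,0)" and CQ0: "CQ qa qb qc qd qe qf (x,y,z) = 0"
      and grad: "y^2*z + y*z^2 = 0" "x^2*z + x*z^2 = 0" "x^2*y + x*y^2 = 0"
    then have "(B*G*x, A*G*y, A*B*z) \<noteq> (0,0,0)"
      using nz by auto
    moreover have "qeval e (B*G*x, A*G*y, A*B*z) = 0"
      unfolding CQ_scaled CQ0 by simp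
    moreover have "qdx e (B*G*x, A*G*y, A*B*z) = 0" "qdy e (B*G*x, A*G*y, A*B*z) = 0"
      "qdz e (B*G*x, A*G*y, A*B*z) = 0"
      unfolding rescaled grad by simp_all
    ultimately show False
      using ns unfolding nonsingular_quartic_def by blast
  qed
qed

lemma K_iso_of_diagonal_scaling:
  fixes K :: "'a::field set" and c e :: "nat \<Rightarrow> nat \<Rightarrow> 'a"
  assumes sf: "is_subfield K" and MK: "\<forall>i<3. \<forall>j<3. M i j \<in> K" and det: "det3 M \<noteq> 0"
    and subst: "\<And>p. qeval e p = qeval c (lin M p)"
    and abg: "\<alpha> \<in> K" "\<beta> \<in> K" "\<gamma> \<in> K" "\<alpha> \<noteq> 0" "\<beta> \<noteq> 0" "\<gamma> \<noteq> 0"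
    and \<kappa>: "\<kappa> \<in> K" "\<kappa> \<noteq> 0"
    and scaled: "\<And>x y z. qeval e (\<alpha>*x, \<beta>*y, \<gamma>*z) = \<kappa> * F (x,y,z)"
  shows "K_iso K c F"
proof -
  define D where "D i j = M i j * (if j = 0 then \<alpha> else if j = 1 then \<beta> else \<gamma>)" for i j
  have "\<forall>i<3. \<forall>j<3. D i j \<in> K"
    using MK abg unfolding D_def by (auto intro!: subfield_closed[OF sf])
  moreover have "det3 D = det3 M * (\<alpha>*\<beta>*\<gamma>)"
    unfolding det3_def D_def by simp algebra
  then have "det3 D \<noteq> 0"
    using det abg by simp
  moreover have "lin D (x,y,z) = lin M (\<alpha>*x, \<beta>*y, \<gamma>*z)" for x y z
    unfolding lin_def D_def by (simp add: algebra_simps)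
  then have "qeval c (lin D p) = \<kappa> * F p" for p
    by (cases p) (simp only: subst[symmetric] scaled)
  ultimately show ?thesis
    unfolding K_iso_def using \<kappa> by blast
qed

lemma K_iso_CQ_of_normal_form:
  fixes K :: "'a::field set" and c e :: "nat \<Rightarrow> nat \<Rightarrow> 'a"
  assumes two: "(2::'a) = 0" and sf: "is_subfield K" and fin: "finite K"
    and MK: "\<forall>i<3. \<forall>j<3. M i j \<in> K" and det: "det3 M \<noteq> 0"
    and subst: "\<And>p. qeval e p = qeval c (lin M p)" and eK: "\<And>i j. e i j \<in> K"
    and zero: "e 0 3 = 0" "e 0 1 = 0" "e 3 0 = 0" "e 1 0 = 0" "e 3 1 = 0" "e 1 3 = 0"
    and nz: "e 2 1 \<noteq> 0" "e 1 2 \<noteq> 0" "e 1 1 \<noteq> 0"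
    and ns: "nonsingular_quartic e"
  shows "\<exists>qa qb qc qd qe qf. qa \<in> K \<and> qb \<in> K \<and> qc \<in> K \<and> qd \<in> K \<and> qe \<in> K \<and> qf \<in> K \<and>
            in_QQ qa qb qc qd qe qf \<and> K_iso K c (CQ qa qb qc qd qe qf)"
proof -
  obtain r where rK: "\<And>i j. r i j \<in> K" and sq: "\<And>i j. e i j = (r i j)^2"
    using finite_char2_subfield_coeff_roots[of K e, OF sf fin two eK] by blast
  define A B G where "A = e 2 1" and "B = e 1 2" and "G = e 1 1"
  have ABG: "A \<noteq> 0" "B \<noteq> 0" "G \<noteq> 0" "A \<in> K" "B \<in> K" "G \<in> K"
    using nz eK unfolding A_def B_def G_def by auto
  have "(A*B*G)^3 \<in> K"
    using ABG by (auto intro!: subfield_closed[OF sf])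
  then obtain \<sigma> where \<sigma>: "\<sigma> \<in> K" "\<sigma>^2 = (A*B*G)^3"
    using finite_char2_subfield_sqrt[OF sf fin two] by blast
  then have "\<sigma> \<noteq> 0"
    using ABG by auto
  define qa qb qc qd qe qf where "qa = r 4 0 * (B*G)^2 / \<sigma>" and "qb = r 0 4 * (A*G)^2 / \<sigma>"
    and "qc = r 0 0 * (A*B)^2 / \<sigma>" and "qd = r 2 2 * (B*G) * (A*G) / \<sigma>"
    and "qe = r 0 2 * (A*G) * (A*B) / \<sigma>" and "qf = r 2 0 * (A*B) * (B*G) / \<sigma>"
  note normal_form = char2_normal_form_CQ[OF two zero sq A_def[symmetric] B_def[symmetric]
      G_def[symmetric] ABG(1-3) \<sigma>(2) \<open>\<sigma> \<noteq> 0\<close>, folded qa_def qb_def qc_def qd_def qe_def qf_def]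
  have "qa \<in> K" "qb \<in> K" "qc \<in> K" "qd \<in> K" "qe \<in> K" "qf \<in> K"
    unfolding qa_def qb_def qc_def qd_def qe_def qf_def
    using rK ABG \<sigma>(1) by (auto intro!: subfield_closed[OF sf])
  moreover have "K_iso K c (CQ qa qb qc qd qe qf)"
    using ABG \<open>(A*B*G)^3 \<in> K\<close>
    by (intro K_iso_of_diagonal_scaling[OF sf MK det subst, of "B*G" "A*G" "A*B" "(A*B*G)^3"])
      (auto intro!: subfield_closed[OF sf] simp: normal_form(1))
  ultimately show ?thesis
    using normal_form(2)[OF ns] by blast
qed

section \<open>Three non-concurrent bitangents\<close>

lemma proportional_to_unit_vector:
  fixes u1 :: "'a::field"
  assumes "(u1,u2,u3) \<noteq> (0,0,0)" and "(u2 = 0 \<and> u3 = 0) \<or> (u1 = 0 \<and> u3 = 0) \<or> (u1 = 0 \<and> u2 = 0)"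
  shows "\<exists>k w. k \<noteq> 0 \<and> w \<in> {(1,0,0),(0,1,0),(0,0,1)} \<and> (u1,u2,u3) = pt_scale k w"
proof -
  consider "u2 = 0" "u3 = 0" "u1 \<noteq> 0" | "u1 = 0" "u3 = 0" "u2 \<noteq> 0" | "u1 = 0" "u2 = 0" "u3 \<noteq> 0"
    using assms by auto
  then show ?thesis
  proof cases
    case 1
    then show ?thesis by (intro exI[of _ u1] exI[of _ "(1,0,0)"]) (simp add: pt_scale_def)
  next
    case 2
    then show ?thesis by (intro exI[of _ u2] exI[of _ "(0,1,0)"]) (simp add: pt_scale_def)
  next
    case 3
    then show ?thesis by (intro exI[of _ u3] exI[of _ "(0,0,1)"]) (simp add: pt_scale_def)
  qed
qed

lemma binary_cubic_root_cases:
  fixes u1 :: "'a::field"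
  assumes "(u1,u2,0::'a) \<noteq> (0,0,0)" and "u1*u2*(B*u1 - A*u2) = 0" and "A \<noteq> 0 \<or> B \<noteq> 0"
  shows "\<exists>k w. k \<noteq> 0 \<and> w \<in> {(1,0,0),(0,1,0),(A,B,0)} \<and> (u1,u2,0) = pt_scale k w"
proof (cases "u1 = 0 \<or> u2 = 0")
  case True
  then show ?thesis
    using proportional_to_unit_vector[OF assms(1)] by (auto simp: pt_scale_def)
next
  case False
  then have "B*u1 = A*u2" and "A \<noteq> 0"
    using assms(2,3) by auto
  then show ?thesis
    using False by (intro exI[of _ "u1/A"] exI[of _ "(A,B,0)"]) (auto simp: pt_scale_def field_simps)
qed

lemma cubic_system_root_cases:
  fixes u1 :: "'a::field"
  assumes u0: "(u1,u2,u3) \<noteq> (0,0,0)"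
    and eq1: "u2 = 0 \<or> u3 = 0 \<or> G*u2 = B*u3"
    and eq2: "u1 = 0 \<or> u3 = 0 \<or> G*u1 = A*u3"
    and eq3: "u1 = 0 \<or> u2 = 0 \<or> B*u1 = A*u2"
    and one_zero: "(A = 0 \<and> B \<noteq> 0 \<and> G \<noteq> 0) \<or> (B = 0 \<and> A \<noteq> 0 \<and> G \<noteq> 0) \<or> (G = 0 \<and> A \<noteq> 0 \<and> B \<noteq> 0)"
  shows "\<exists>k w. k \<noteq> 0 \<and> w \<in> {(1,0,0),(0,1,0),(0,0,1),(A,B,G)} \<and> (u1,u2,u3) = pt_scale k w"
proof (cases "(u2 = 0 \<and> u3 = 0) \<or> (u1 = 0 \<and> u3 = 0) \<or> (u1 = 0 \<and> u2 = 0)")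
  case True
  then show ?thesis
    using proportional_to_unit_vector[OF u0] by blast
next
  case False
  then have "\<exists>k. k \<noteq> 0 \<and> (u1,u2,u3) = pt_scale k (A,B,G)"
    using one_zero
  proof (elim disjE conjE)
    assume "A = 0" "B \<noteq> 0" "G \<noteq> 0"
    with False eq1 eq2 eq3 show ?thesis
      by (intro exI[of _ "u2/B"]) (auto simp: pt_scale_def field_simps)
  next
    assume "B = 0" "A \<noteq> 0" "G \<noteq> 0"
    with False eq1 eq2 eq3 show ?thesis
      by (intro exI[of _ "u1/A"]) (auto simp: pt_scale_def field_simps)
  next
    assume "G = 0" "A \<noteq> 0" "B \<noteq> 0"
    with False eq1 eq2 eq3 show ?thesis
      by (intro exI[of _ "u1/A"]) (auto simp: pt_scale_def field_simps)
  qed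
  then show ?thesis
    by blast
qed

context char2_cube_root
begin

lemma bitangent_cases_normal_form_xy:
  fixes c e :: "nat \<Rightarrow> nat \<Rightarrow> 'a"
  assumes L: "L \<in> bitangents c" and det: "det3 M \<noteq> 0"
    and subst: "\<And>q. qeval e q = qeval c (lin M q)"
    and zero: "e 0 3 = 0" "e 3 0 = 0" and AB: "e 2 1 \<noteq> 0 \<or> e 1 2 \<noteq> 0"
    and through: "lin M (0,0,1) \<in> L"
  shows "\<exists>k w. k \<noteq> 0 \<and> w \<in> {(1,0,0),(0,1,0),(e 2 1, e 1 2, 0)} \<and> L = lin M ` line_set (pt_scale k w)"
proof -
  obtain u where u0: "u \<noteq> (0,0,0)" and L_u: "L = lin M ` line_set u"
    and mem: "\<And>p. lin M p \<in> L \<longleftrightarrow> dot u p = 0"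
    and polar_0: "\<And>U V. dot u U = 0 \<Longrightarrow> dot u V = 0 \<Longrightarrow> polar e U V = 0"
    using bitangent_in_coordinates[OF L det subst] by blast
  obtain u1 u2 u3 where u: "u = (u1,u2,u3)" by (cases u)
  have u3: "u3 = 0"
    using through mem u by (simp add: dot_def)
  have "qdz e (u2, -u1, 0) = 0"
    using polar_0[of "(u2,-u1,0)" "(0,0,1)"] u u3 by (simp add: dot_def polar_basis)
  then have "u1*u2*(e 1 2*u1 - e 2 1*u2) = 0"
    using zero by (simp add: qdz_expand power2_eq_square power3_eq_cube algebra_simps)
  moreover have "(u1,u2,0::'a) \<noteq> (0,0,0)"
    using u0 u u3 by simp
  ultimately obtain k w where kw: "k \<noteq> 0" "w \<in> {(1,0,0),(0,1,0),(e 2 1, e 1 2, 0)}"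
    "(u1,u2,0) = pt_scale k w"
    using binary_cubic_root_cases[of u1 u2 "e 1 2" "e 2 1"] AB by blast
  moreover have "L = lin M ` line_set (pt_scale k w)"
    using L_u u u3 kw(3) by simp
  ultimately show ?thesis
    by blast
qed

lemma third_bitangent:
  fixes c :: "nat \<Rightarrow> nat \<Rightarrow> 'a"
  assumes ac: "alg_closed TYPE('a)" and ns: "nonsingular_quartic c" and ord: "ordinary_quartic c"
    and L1: "line_set w1 \<in> bitangents c" and L2: "line_set w2 \<in> bitangents c"
    and w12: "cross w1 w2 \<noteq> (0,0,0)"
  shows "\<exists>L\<in>bitangents c. cross w1 w2 \<notin> L"
proof (rule ccontr)
  assume through: "\<not> (\<exists>L\<in>bitangents c. cross w1 w2 \<notin> L)"
  obtain w3 where w3: "dot w3 (cross w1 w2) \<noteq> 0"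
    using pt_nonzero_dot_basis[OF w12] by blast
  define M where "M = frame w1 w2 w3"
  define e where "e = qsubst c M"
  have det: "det3 M \<noteq> 0"
    using w3 unfolding M_def det3_frame triple_rotate by simp
  have subst: "\<And>q. qeval e q = qeval c (lin M q)"
    unfolding e_def by (rule qeval_qsubst)
  have zero: "e 0 3 = 0" "e 0 1 = 0" "e 3 0 = 0" "e 1 0 = 0"
    using qsubst_frame_coeffs_1[OF L1] qsubst_frame_coeffs_2[OF L2] unfolding e_def M_def by auto
  have "nonsingular_quartic e"
    by (rule nonsingular_lin_subst[OF subst det ns])
  then have "e 2 1 \<noteq> 0 \<or> e 1 2 \<noteq> 0"
    using normal_form_xy_singular[OF two_eq_zero ac zero] by blast
  moreover have "lin M (0,0,1) \<in> L" if "L \<in> bitangents c" for L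
    using through that unfolding M_def lin_frame_e3 by blast
  ultimately have "7 \<le> card {(1,0,0), (0,1,0), (e 2 1, e 1 2, 0::'a)}"
    using bitangent_cases_normal_form_xy[OF _ det subst zero(1,3)]
    by (intro ordinary_quartic_card_le_lines[OF ord]) simp_all
  then show False
    using card_length[of "[(1,0,0), (0,1,0), (e 2 1, e 1 2, 0::'a)]"] by simp
qed

lemma bitangent_cases_normal_form_xyz:
  fixes c e :: "nat \<Rightarrow> nat \<Rightarrow> 'a"
  assumes L: "L \<in> bitangents c" and det: "det3 M \<noteq> 0"
    and subst: "\<And>q. qeval e q = qeval c (lin M q)"
    and zero: "e 0 3 = 0" "e 0 1 = 0" "e 3 0 = 0" "e 1 0 = 0" "e 3 1 = 0" "e 1 3 = 0"
    and one_zero: "(e 2 1 = 0 \<and> e 1 2 \<noteq> 0 \<and> e 1 1 \<noteq> 0) \<or> (e 1 2 = 0 \<and> e 2 1 \<noteq> 0 \<and> e 1 1 \<noteq> 0)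
      \<or> (e 1 1 = 0 \<and> e 2 1 \<noteq> 0 \<and> e 1 2 \<noteq> 0)"
  shows "\<exists>k w. k \<noteq> 0 \<and> w \<in> {(1,0,0),(0,1,0),(0,0,1),(e 2 1, e 1 2, e 1 1)}
      \<and> L = lin M ` line_set (pt_scale k w)"
proof -
  note grad = char2_normal_form_xyz_grad[OF two_eq_zero zero]
  obtain u where u0: "u \<noteq> (0,0,0)" and L_u: "L = lin M ` line_set u"
    and "\<And>p. lin M p \<in> L \<longleftrightarrow> dot u p = 0"
    and polar_0: "\<And>U V. dot u U = 0 \<Longrightarrow> dot u V = 0 \<Longrightarrow> polar e U V = 0"
    using bitangent_in_coordinates[OF L det subst] by blast
  obtain u1 u2 u3 where u: "u = (u1,u2,u3)" by (cases u)
  have "dot u (0,u3,-u2) = 0" "dot u (u3,0,-u1) = 0" "dot u (u2,-u1,0) = 0"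
    unfolding u dot_def by (simp_all add: algebra_simps)
  moreover have "polar e (0,u3,-u2) (u3,0,-u1) = u2*u3^2*(e 1 1*u2 - e 1 2*u3)"
    and "polar e (u3,0,-u1) (0,u3,-u2) = u1*u3^2*(e 1 1*u1 - e 2 1*u3)"
    and "polar e (u2,-u1,0) (0,u3,-u2) = u1*u2^2*(e 2 1*u2 - e 1 2*u1)"
    unfolding polar_def prod.case grad by (simp_all add: power2_eq_square; algebra)+
  ultimately have "u2 = 0 \<or> u3 = 0 \<or> e 1 1*u2 = e 1 2*u3" "u1 = 0 \<or> u3 = 0 \<or> e 1 1*u1 = e 2 1*u3"
    "u1 = 0 \<or> u2 = 0 \<or> e 1 2*u1 = e 2 1*u2"
    using polar_0 by (metis divisors_zero eq_iff_diff_eq_0 power_not_zero)+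
  then obtain k w where kw: "k \<noteq> 0" "w \<in> {(1,0,0),(0,1,0),(0,0,1),(e 2 1, e 1 2, e 1 1)}"
    "(u1,u2,u3) = pt_scale k w"
    using cubic_system_root_cases[of u1 u2 u3 "e 1 1" "e 1 2" "e 2 1"] one_zero u0 u by blast
  moreover have "L = lin M ` line_set (pt_scale k w)"
    using L_u u kw(3) by simp
  ultimately show ?thesis
    by blast
qed

lemma frame_coeffs_nonzero:
  fixes c :: "nat \<Rightarrow> nat \<Rightarrow> 'a"
  assumes ac: "alg_closed TYPE('a)" and ns: "nonsingular_quartic c" and ord: "ordinary_quartic c"
    and L1: "line_set w1 \<in> bitangents c" and L2: "line_set w2 \<in> bitangents c"
    and L3: "line_set w3 \<in> bitangents c" and tri: "triple w1 w2 w3 \<noteq> 0"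
  defines "e \<equiv> qsubst c (frame w1 w2 w3)"
  shows "e 2 1 \<noteq> 0 \<and> e 1 2 \<noteq> 0 \<and> e 1 1 \<noteq> 0"
proof (rule ccontr)
  assume not_all: "\<not> (e 2 1 \<noteq> 0 \<and> e 1 2 \<noteq> 0 \<and> e 1 1 \<noteq> 0)"
  define M where "M = frame w1 w2 w3"
  have subst: "\<And>q. qeval e q = qeval c (lin M q)"
    unfolding e_def M_def by (rule qeval_qsubst)
  have det: "det3 M \<noteq> 0"
    using tri unfolding M_def det3_frame by simp
  have zero: "e 0 3 = 0" "e 0 1 = 0" "e 3 0 = 0" "e 1 0 = 0" "e 3 1 = 0" "e 1 3 = 0"
    using qsubst_frame_coeffs_1[OF L1] qsubst_frame_coeffs_2[OF L2] qsubst_frame_coeffs_3[OF L3]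
    unfolding e_def by auto
  have "nonsingular_quartic e"
    by (rule nonsingular_lin_subst[OF subst det ns])
  then have "\<not> ((e 2 1 = 0 \<and> e 1 2 = 0) \<or> (e 2 1 = 0 \<and> e 1 1 = 0) \<or> (e 1 2 = 0 \<and> e 1 1 = 0))"
    using normal_form_xyz_singular[OF two_eq_zero ac zero] by blast
  then have "(e 2 1 = 0 \<and> e 1 2 \<noteq> 0 \<and> e 1 1 \<noteq> 0) \<or> (e 1 2 = 0 \<and> e 2 1 \<noteq> 0 \<and> e 1 1 \<noteq> 0)
      \<or> (e 1 1 = 0 \<and> e 2 1 \<noteq> 0 \<and> e 1 2 \<noteq> 0)"
    using not_all by argo
  then have "7 \<le> card {(1,0,0), (0,1,0), (0,0,1), (e 2 1, e 1 2, e 1 1)}"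
    using bitangent_cases_normal_form_xyz[OF _ det subst zero]
    by (intro ordinary_quartic_card_le_lines[OF ord]) simp_all
  then show False
    using card_length[of "[(1,0,0), (0,1,0), (0,0,1), (e 2 1, e 1 2, e 1 1)]"] by simp
qed

lemma three_bitangents_over:
  fixes K :: "'a set" and c :: "nat \<Rightarrow> nat \<Rightarrow> 'a"
  assumes ac: "alg_closed TYPE('a)" and ns: "nonsingular_quartic c" and ord: "ordinary_quartic c"
    and over: "\<forall>L\<in>bitangents c. line_over K L"
  obtains w1 w2 w3 where "pt_over K w1" "pt_over K w2" "pt_over K w3"
    and "line_set w1 \<in> bitangents c" "line_set w2 \<in> bitangents c" "line_set w3 \<in> bitangents c"
    and "triple w1 w2 w3 \<noteq> 0"
proof -
  have over_K: "\<exists>w. w \<noteq> (0,0,0) \<and> pt_over K w \<and> L = line_set w" if "L \<in> bitangents c" for L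
    using over that unfolding line_over_def pt_over_def by fastforce
  have fin: "finite (bitangents c)" and card: "card (bitangents c) = 7"
    using ord unfolding ordinary_quartic_def by auto
  have "bitangents c \<noteq> {}"
    using card by (intro notI) simp
  then obtain L1 where L1: "L1 \<in> bitangents c"
    by blast
  have "card (bitangents c - {L1}) = 6"
    using fin card L1 by simp
  then have "bitangents c - {L1} \<noteq> {}"
    by (intro notI) simp
  then obtain L2 where L2: "L2 \<in> bitangents c" and "L2 \<noteq> L1"
    by blast
  obtain w1 w2 where w1: "w1 \<noteq> (0,0,0)" "pt_over K w1" "L1 = line_set w1"
    and w2: "w2 \<noteq> (0,0,0)" "pt_over K w2" "L2 = line_set w2"
    using over_K L1 L2 by metis
  have "cross w1 w2 \<noteq> (0,0,0)"
    using line_set_eq_if_cross_eq_0[OF w1(1) w2(1)] w1(3) w2(3) \<open>L2 \<noteq> L1\<close> by auto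
  then obtain L3 where L3: "L3 \<in> bitangents c" and "cross w1 w2 \<notin> L3"
    using third_bitangent[OF ac ns ord] L1 L2 w1(3) w2(3) by blast
  then obtain w3 where w3: "pt_over K w3" "L3 = line_set w3" and "dot w3 (cross w1 w2) \<noteq> 0"
    using over_K unfolding line_set_dot by blast
  then show thesis
    using that w1 w2 L1 L2 L3 by (simp add: triple_rotate)
qed

lemma K_iso_CQ_if_bitangents_over:
  fixes K :: "'a set" and c :: "nat \<Rightarrow> nat \<Rightarrow> 'a"
  assumes ac: "alg_closed TYPE('a)" and sf: "is_subfield K" and fin: "finite K"
    and cK: "\<forall>i j. i + j \<le> 4 \<longrightarrow> c i j \<in> K"
    and ns: "nonsingular_quartic c" and ord: "ordinary_quartic c"
    and over: "\<forall>L\<in>bitangents c. line_over K L"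
  shows "\<exists>a b cc d e f. a \<in> K \<and> b \<in> K \<and> cc \<in> K \<and> d \<in> K \<and> e \<in> K \<and> f \<in> K \<and>
            in_QQ a b cc d e f \<and> K_iso K c (CQ a b cc d e f)"
proof -
  obtain w1 w2 w3 where w: "pt_over K w1" "pt_over K w2" "pt_over K w3"
    and L: "line_set w1 \<in> bitangents c" "line_set w2 \<in> bitangents c" "line_set w3 \<in> bitangents c"
    and tri: "triple w1 w2 w3 \<noteq> 0"
    using three_bitangents_over[OF ac ns ord over] by blast
  define M where "M = frame w1 w2 w3"
  define e where "e = qsubst c M"
  have MK: "\<forall>i<3. \<forall>j<3. M i j \<in> K"
    unfolding M_def using frame_over[OF sf w] by blast
  have det: "det3 M \<noteq> 0"
    using tri unfolding M_def det3_frame by simp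
  have subst: "\<And>p. qeval e p = qeval c (lin M p)"
    unfolding e_def by (rule qeval_qsubst)
  have eK: "\<And>i j. e i j \<in> K"
    unfolding e_def by (rule qsubst_over[OF sf cK MK])
  have zero: "e 0 3 = 0" "e 0 1 = 0" "e 3 0 = 0" "e 1 0 = 0" "e 3 1 = 0" "e 1 3 = 0"
    using qsubst_frame_coeffs_1[OF L(1)] qsubst_frame_coeffs_2[OF L(2)] qsubst_frame_coeffs_3[OF L(3)]
    unfolding e_def M_def by auto
  have nz: "e 2 1 \<noteq> 0" "e 1 2 \<noteq> 0" "e 1 1 \<noteq> 0"
    using frame_coeffs_nonzero[OF ac ns ord L tri] unfolding e_def M_def by auto
  have "nonsingular_quartic e"
    by (rule nonsingular_lin_subst[OF subst det ns])
  then show ?thesis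
    by (rule K_iso_CQ_of_normal_form[OF two_eq_zero sf fin MK det subst eK zero nz])
qed

end

theorem lemma1p2:
  fixes K :: "'a::field set" and c :: "nat \<Rightarrow> nat \<Rightarrow> 'a"
  assumes "char2 TYPE('a)" and "alg_closed TYPE('a)"
    and "is_subfield K" and "finite K" and "algebraic_over K"
    and "\<forall>i j. i + j \<le> 4 \<longrightarrow> c i j \<in> K"
    and "nonsingular_quartic c" and "ordinary_quartic c"
  shows "(\<forall>L\<in>bitangents c. line_over K L) \<longleftrightarrow>
         (\<exists>a b cc d e f. a \<in> K \<and> b \<in> K \<and> cc \<in> K \<and> d \<in> K \<and> e \<in> K \<and> f \<in> K \<and>
            in_QQ a b cc d e f \<and> K_iso K c (CQ a b cc d e f))"
proof -
  have two: "(2::'a) = 0"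
    using assms(1) by (rule char2_two_eq_zero)
  obtain \<omega> :: 'a where "\<omega>^2 + \<omega> + 1 = 0"
    using alg_closed_cube_root_of_unity[OF assms(2)] by blast
  with two interpret char2_cube_root \<omega>
    by unfold_locales
  show ?thesis
    using K_iso_CQ_if_bitangents_over[OF assms(2-4,6-8)] bitangents_over_if_K_iso_CQ[OF two assms(3,4,8)]
    by blast
qed

end
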